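(* Let $\{a_k\}\subset\mathbb{C}\setminus\{0\}$ be a sequence without finite limit points (each point with finite multiplicity) such that the limit $\lim_{R\to\infty}\sum_{|a_k|<R} a_k^{-1}$ exists, $n(0,t)=O(t)$ as $t\to\infty$, and $n(0,t+1)-n(0,t)=o(t)$ as $t\to\infty$. Then $$g(z)=\lim_{R\to\infty}\prod_{|a_k|<R}(1-z/a_k)$$ is a well-defined entire function of finite exponential type, and for all $z\in\mathbb{C}$ $$\log|g(z)|=\int_0^\infty [n(0,t)-n(z,t)]\,t^{-1}\,dt.$$ Moreover, if $z_0$ is a point of the sequence $\{a_k\}$ with multiplicity $l=n(z_0,0)>0$, then $$\log\left|\frac{g^{(l)}(z_0)}{l!}\right|=\int_1^\infty\frac{n(0,t)-n(z_0,t)}{t}\,dt+\int_0^1\frac{n(0,t)-n(z_0,t)+l}{t}\,dt.$$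
   Context: For $c\in\mathbb{C}$ and $t\ge 0$, $n(c,t)=\mathrm{card}\{a_k:\,|a_k-c|\le t\}$, counted with multiplicity. An entire function has finite exponential type if $|g(z)|\le Ae^{B|z|}$ for some constants $A,B$. *)

theory Defs
  imports "HOL-Complex_Analysis.Complex_Analysis" "HOL-Library.Landau_Symbols"
begin

text \<open>The sequence is given as a map a from an index set K (a set of naturals;
  finite or infinite) to the complex numbers; multiplicities are repetitions.\<close>

definition cnt :: "nat set \<Rightarrow> (nat \<Rightarrow> complex) \<Rightarrow> complex \<Rightarrow> real \<Rightarrow> real" where
  "cnt K a c t = real (card {k\<in>K. cmod (a k - c) \<le> t})"

definition partial_prod :: "nat set \<Rightarrow> (nat \<Rightarrow> complex) \<Rightarrow> real \<Rightarrow> complex \<Rightarrow> complex" where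
  "partial_prod K a R z = (\<Prod>k\<in>{k\<in>K. cmod (a k) < R}. 1 - z / a k)"

end

theory Submission
  imports Defs
begin

text \<open>
  Partial summation against \<open>n(0,t) = O(t)\<close> shows that the sum of \<open>|a k|^-2\<close> over
  \<open>|a k| \<ge> R\<close> is \<open>O(1/R)\<close>. Together with the convergence of the symmetric sums of
  \<open>1/a k\<close> this makes \<open>log \<Prod>(1 - z/a k)\<close> over \<open>R \<le> |a k| < R'\<close> equal to
  \<open>-z \<Sum> 1/a k + O(|z|^2/R)\<close>, which is small uniformly on compact sets; so the
  partial products converge locally uniformly to an entire function \<open>g\<close>, and the
  same estimate with \<open>R = 2|z|\<close> shows that \<open>g\<close> has exponential type.

  For \<open>z\<close> off the sequence, partial summation gives that the integral of
  \<open>(n(0,t) - n(z,t))/t\<close> over \<open>[0,T]\<close> is \<open>log |\<Prod>(1 - z/a k)|\<close> over \<open>|a k| \<le> T\<close> plus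
  the error made by centring the disc of the Jensen sum of \<open>z\<close> at \<open>0\<close> instead of
  \<open>z\<close>. Only points of the shell \<open>T - |z| < |w| \<le> T + |z|\<close> contribute to that error,
  each by at most \<open>2|z|/T\<close>, and the shell contains \<open>o(T)\<close> points by the hypothesis
  on \<open>n(0,t+1) - n(0,t)\<close>.

  At a point \<open>z\<^sub>0\<close> of multiplicity \<open>l\<close> we remove its copies from the sequence:
  \<open>g = (1 - w/z\<^sub>0)^l g\<^sub>1\<close> with \<open>g\<^sub>1(z\<^sub>0) \<noteq> 0\<close>, so \<open>g^(l)(z\<^sub>0)/l! = (-1/z\<^sub>0)^l g\<^sub>1(z\<^sub>0)\<close>,
  and the formula follows from the one for \<open>g\<^sub>1\<close> after correcting the counting
  functions by \<open>l\<close>.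
\<close>

section \<open>Integrals on half-lines and of step functions\<close>

lemma has_integral_atLeast_tendsto:
  fixes f :: "real \<Rightarrow> 'a::banach"
  assumes int: "\<And>T. T \<ge> c \<Longrightarrow> f integrable_on {c..T}"
    and lim: "((\<lambda>T. integral {c..T} f) \<longlongrightarrow> I) at_top"
  shows "(f has_integral I) {c..}"
proof -
  have not_box: "\<not> (\<exists>a b. {c..} = cbox a b)"
  proof
    assume "\<exists>a b. {c..} = cbox a b"
    then obtain a b where e: "{c..} = cbox a (b::real)" by blast
    have "max c b + 1 \<in> {c..}" by simp
    then show False using e by (auto simp: cbox_interval)
  qed
  show ?thesis
  proof (subst has_integral_alt, simp only: not_box if_False, intro allI impI)
    fix e :: real assume "e > 0"
    from lim[THEN tendstoD, OF this] obtain T0 where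
      T0: "\<And>T. T \<ge> T0 \<Longrightarrow> dist (integral {c..T} f) I < e"
      by (auto simp: eventually_at_top_linorder)
    define B where "B = max T0 \<bar>c\<bar> + 1"
    have "\<exists>z. ((\<lambda>x. if x \<in> {c..} then f x else 0) has_integral z) (cbox a b) \<and> norm (z - I) < e"
      if sub: "ball 0 B \<subseteq> cbox a b" for a b
    proof -
      have "- (B - 1/2) \<in> cbox a b" "B - 1/2 \<in> cbox a b"
        using subsetD[OF sub, of "- (B - 1/2)"] subsetD[OF sub, of "B - 1/2"] by (auto simp: B_def)
      then have ab: "a \<le> - (B - 1/2)" "b \<ge> B - 1/2"
        by (auto simp: cbox_interval)
      have "(f has_integral integral {c..b} f) (cbox c b)"
        using int[of b] ab by (simp add: cbox_interval integrable_integral B_def)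
      then have "((\<lambda>x. if x \<in> cbox c b then f x else 0) has_integral integral {c..b} f) (cbox a b)"
        by (rule has_integral_restrict_closed_subinterval) (use ab in \<open>auto simp: cbox_interval B_def\<close>)
      then have "((\<lambda>x. if x \<in> {c..} then f x else 0) has_integral integral {c..b} f) (cbox a b)"
        by (rule has_integral_eq[rotated]) (auto simp: cbox_interval)
      moreover have "norm (integral {c..b} f - I) < e"
        using T0[of b] ab by (simp add: dist_norm B_def)
      ultimately show ?thesis by blast
    qed
    moreover have "B > 0" by (simp add: B_def)
    ultimately show "\<exists>B>0. \<forall>a b. ball 0 B \<subseteq> cbox a b \<longrightarrow>
        (\<exists>z. ((\<lambda>x. if x \<in> {c..} then f x else 0) has_integral z) (cbox a b) \<and> norm (z - I) < e)"
      by blast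
  qed
qed

lemma has_integral_from_deriv:
  fixes f f' :: "real \<Rightarrow> real"
  assumes "\<alpha> \<le> d" "d \<le> T" "\<And>t. d \<le> t \<Longrightarrow> t \<le> T \<Longrightarrow> (f has_real_derivative f' t) (at t)"
  shows "((\<lambda>t. if d \<le> t then f' t else 0) has_integral (f T - f d)) {\<alpha>..T}"
proof -
  have "(f' has_integral (f T - f d)) {d..T}"
    using assms
    by (intro fundamental_theorem_of_calculus)
       (auto intro: has_field_derivative_at_within simp flip: has_real_derivative_iff_has_vector_derivative)
  then have "((\<lambda>t. if t \<in> cbox d T then f' t else 0) has_integral (f T - f d)) (cbox \<alpha> T)"
    by (intro has_integral_restrict_closed_subinterval) (use assms in \<open>auto simp: cbox_interval\<close>)
  then show ?thesis unfolding cbox_interval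
    by (rule has_integral_eq[rotated]) auto
qed

lemma has_integral_card_le_mult_deriv:
  fixes F :: "'a set" and d :: "'a \<Rightarrow> real" and f f' :: "real \<Rightarrow> real"
  assumes "finite F" "\<And>k. k \<in> F \<Longrightarrow> \<alpha> \<le> d k"
    and "\<And>t k. k \<in> F \<Longrightarrow> d k \<le> t \<Longrightarrow> t \<le> T \<Longrightarrow> (f has_real_derivative f' t) (at t)"
  shows "((\<lambda>t. real (card {k\<in>F. d k \<le> t}) * f' t) has_integral
            (\<Sum>k\<in>{k\<in>F. d k \<le> T}. f T - f (d k))) {\<alpha>..T}"
proof -
  have each: "((\<lambda>t. if d k \<le> t then f' t else 0) has_integral
      (if d k \<le> T then f T - f (d k) else 0)) {\<alpha>..T}" if k: "k \<in> F" for k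
  proof (cases "d k \<le> T")
    case True
    then show ?thesis using has_integral_from_deriv[of \<alpha> "d k" T f f'] assms k by auto
  next
    case False
    have "((\<lambda>t. 0) has_integral 0) {\<alpha>..T}" by simp
    then have "((\<lambda>t. if d k \<le> t then f' t else 0) has_integral 0) {\<alpha>..T}"
      by (rule has_integral_eq[rotated]) (use False in auto)
    then show ?thesis using False by simp
  qed
  have "((\<lambda>t. \<Sum>k\<in>F. if d k \<le> t then f' t else 0) has_integral
          (\<Sum>k\<in>F. if d k \<le> T then f T - f (d k) else 0)) {\<alpha>..T}"
    by (rule has_integral_sum) (use assms each in auto)
  moreover have "(\<Sum>k\<in>F. if d k \<le> t then f' t else 0) = real (card {k\<in>F. d k \<le> t}) * f' t" for t
    using assms(1) by (simp add: sum.If_cases Int_def)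
  moreover have "(\<Sum>k\<in>F. if d k \<le> T then f T - f (d k) else 0) = (\<Sum>k\<in>{k\<in>F. d k \<le> T}. f T - f (d k))"
    using assms(1) by (simp add: sum.If_cases Int_def)
  ultimately show ?thesis by simp
qed

lemma has_integral_inverse_from:
  fixes l :: real
  assumes "0 < c" "0 \<le> T"
  shows "((\<lambda>t. if c \<le> t then l / t else 0) has_integral (if c \<le> T then l * (ln T - ln c) else 0)) {0..T}"
proof (cases "c \<le> T")
  case True
  have "((\<lambda>t. if c \<le> t then l / t else 0) has_integral l * ln T - l * ln c) {0..T}"
  proof (rule has_integral_from_deriv)
    fix t assume "c \<le> t"
    then have "t > 0" using assms by linarith
    then show "((\<lambda>t. l * ln t) has_real_derivative l / t) (at t)"
      by (auto intro!: derivative_eq_intros)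
  qed (use assms True in auto)
  then show ?thesis using True by (simp add: algebra_simps)
next
  case False
  have "((\<lambda>t. 0) has_integral 0) {0..T}" by simp
  then have "((\<lambda>t. if c \<le> t then l / t else 0) has_integral 0) {0..T}"
    by (rule has_integral_eq[rotated]) (use False in auto)
  with False show ?thesis by simp
qed

lemma has_integral_inverse_below:
  fixes l :: real
  assumes "0 < \<epsilon>"
  shows "((\<lambda>t. if t < c then l / t else 0) has_integral l * (ln (max \<epsilon> c) - ln \<epsilon>)) {\<epsilon>..}"
proof -
  define M where "M = max \<epsilon> c"
  have "((\<lambda>t. l / t) has_integral l * ln M - l * ln \<epsilon>) {\<epsilon>..M}"
  proof (rule fundamental_theorem_of_calculus)
    fix t assume "t \<in> {\<epsilon>..M}"
    then have "t > 0" using assms by auto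
    then show "((\<lambda>t. l * ln t) has_vector_derivative l / t) (at t within {\<epsilon>..M})"
      unfolding has_real_derivative_iff_has_vector_derivative[symmetric]
      by (auto intro!: derivative_eq_intros)
  qed (simp add: M_def)
  then have "((\<lambda>t. if t < c then l / t else 0) has_integral l * (ln M - ln \<epsilon>)) {\<epsilon>..M}"
    unfolding right_diff_distrib by (rule has_integral_spike[OF negligible_sing[of M], rotated])
       (auto simp: M_def max_def split: if_splits)
  moreover have "((\<lambda>t. if t < c then l / t else 0) has_integral y) {\<epsilon>..M}
      \<longleftrightarrow> ((\<lambda>t. if t < c then l / t else 0) has_integral y) {\<epsilon>..}" for y
  proof (rule has_integral_spike_set_eq)
    have e1: "{t \<in> {\<epsilon>..M} - {\<epsilon>..}. (if t < c then l / t else 0) \<noteq> 0} = {}"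
      and e2: "{t \<in> {\<epsilon>..} - {\<epsilon>..M}. (if t < c then l / t else 0) \<noteq> 0} = {}"
      by (auto simp: M_def)
    show "negligible {t \<in> {\<epsilon>..M} - {\<epsilon>..}. (if t < c then l / t else 0) \<noteq> 0}"
      and "negligible {t \<in> {\<epsilon>..} - {\<epsilon>..M}. (if t < c then l / t else 0) \<noteq> 0}"
      unfolding e1 e2 by simp_all
  qed
  ultimately show ?thesis by (simp add: M_def)
qed

section \<open>Counting functions\<close>

lemma finite_cnt_set:
  assumes fin: "\<And>R. finite {k\<in>K. cmod (a k) \<le> R}"
  shows "finite {k\<in>K. cmod (a k - c) \<le> t}"
proof -
  have "{k\<in>K. cmod (a k - c) \<le> t} \<subseteq> {k\<in>K. cmod (a k) \<le> t + cmod c}"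
  proof safe
    fix k assume "k \<in> K" "cmod (a k - c) \<le> t"
    moreover have "cmod (a k) \<le> cmod (a k - c) + cmod c" by (metis norm_triangle_sub add.commute)
    ultimately show "cmod (a k) \<le> t + cmod c" by linarith
  qed
  then show ?thesis using fin finite_subset by blast
qed

lemma cnt_mono:
  assumes fin: "\<And>R. finite {k\<in>K. cmod (a k) \<le> R}" and "s \<le> t"
  shows "cnt K a c s \<le> cnt K a c t"
  unfolding cnt_def using finite_cnt_set[OF fin, of c t] assms(2)
  by (intro of_nat_mono card_mono) auto

lemma cnt_subset_le:
  assumes fin: "\<And>R. finite {k\<in>K. cmod (a k) \<le> R}" and "K' \<subseteq> K"
  shows "cnt K' a c t \<le> cnt K a c t"
  unfolding cnt_def using finite_cnt_set[OF fin, of c t] assms(2)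
  by (intro of_nat_mono card_mono) auto

lemma card_shell_eq_cnt_diff:
  assumes fin: "\<And>R. finite {k\<in>K. cmod (a k) \<le> R}" and "s \<le> t"
  shows "real (card {k\<in>K. s < cmod (a k - c) \<and> cmod (a k - c) \<le> t}) = cnt K a c t - cnt K a c s"
proof -
  have "{k\<in>K. cmod (a k - c) \<le> t} =
      {k\<in>K. cmod (a k - c) \<le> s} \<union> {k\<in>K. s < cmod (a k - c) \<and> cmod (a k - c) \<le> t}"
    using assms(2) by auto
  moreover have "card ({k\<in>K. cmod (a k - c) \<le> s} \<union> {k\<in>K. s < cmod (a k - c) \<and> cmod (a k - c) \<le> t})
     = card {k\<in>K. cmod (a k - c) \<le> s} + card {k\<in>K. s < cmod (a k - c) \<and> cmod (a k - c) \<le> t}"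
    by (rule card_Un_disjoint)
       (auto intro: finite_subset[OF _ finite_cnt_set[OF fin, of c t]]
                    finite_subset[OF _ finite_cnt_set[OF fin, of c s]])
  ultimately show ?thesis unfolding cnt_def by simp
qed

lemma cnt_remove_point:
  assumes fin: "\<And>R. finite {k\<in>K. cmod (a k) \<le> R}"
  shows "cnt K a c t = cnt {k\<in>K. a k \<noteq> z} a c t
           + (if cmod (z - c) \<le> t then real (card {k\<in>K. a k = z}) else 0)"
proof -
  have e: "{k\<in>K. cmod (a k - c) \<le> t} = {k\<in>{k\<in>K. a k \<noteq> z}. cmod (a k - c) \<le> t}
      \<union> (if cmod (z - c) \<le> t then {k\<in>K. a k = z} else {})"
    by auto
  have "card {k\<in>K. cmod (a k - c) \<le> t} = card {k\<in>{k\<in>K. a k \<noteq> z}. cmod (a k - c) \<le> t}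
      + card (if cmod (z - c) \<le> t then {k\<in>K. a k = z} else {})"
    unfolding e
    by (rule card_Un_disjoint) (auto intro: finite_subset[OF _ finite_cnt_set[OF fin, of c t]])
  then show ?thesis by (simp add: cnt_def)
qed

lemma has_integral_cnt_div:
  assumes fin: "\<And>R. finite {k\<in>K. cmod (a k) \<le> R}"
    and nz: "\<And>k. k \<in> K \<Longrightarrow> a k \<noteq> c"
  shows "((\<lambda>t. cnt K a c t / t) has_integral
           (\<Sum>k\<in>{k\<in>K. cmod (a k - c) \<le> T}. ln T - ln (cmod (a k - c)))) {0..T}"
proof -
  define F where "F = {k\<in>K. cmod (a k - c) \<le> T}"
  have "finite F" unfolding F_def by (rule finite_cnt_set[OF fin])
  then have "((\<lambda>t. real (card {k\<in>F. cmod (a k - c) \<le> t}) * (1 / t)) has_integral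
            (\<Sum>k\<in>{k\<in>F. cmod (a k - c) \<le> T}. ln T - ln (cmod (a k - c)))) {0..T}"
  proof (rule has_integral_card_le_mult_deriv)
    fix t k assume k: "k \<in> F" and "cmod (a k - c) \<le> t"
    moreover have "cmod (a k - c) > 0" using nz k by (auto simp: F_def)
    ultimately have "t > 0" by linarith
    then show "(ln has_real_derivative 1 / t) (at t)"
      by (auto intro!: derivative_eq_intros)
  qed simp
  moreover have "{k\<in>F. cmod (a k - c) \<le> T} = F" by (auto simp: F_def)
  ultimately have "((\<lambda>t. real (card {k\<in>F. cmod (a k - c) \<le> t}) * (1 / t)) has_integral
            (\<Sum>k\<in>F. ln T - ln (cmod (a k - c)))) {0..T}" by simp
  then show ?thesis
    unfolding F_def[symmetric]
  proof (rule has_integral_eq[rotated])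
    fix t assume "t \<in> {0..T}"
    then have "{k\<in>F. cmod (a k - c) \<le> t} = {k\<in>K. cmod (a k - c) \<le> t}" by (auto simp: F_def)
    then show "real (card {k\<in>F. cmod (a k - c) \<le> t}) * (1 / t) = cnt K a c t / t"
      by (simp add: cnt_def)
  qed
qed

lemma cnt_eq_0_near_0:
  assumes fin: "\<And>R. finite {k\<in>K. cmod (a k) \<le> R}"
    and nz: "\<And>k. k \<in> K \<Longrightarrow> a k \<noteq> c"
  obtains \<delta> where "\<delta> > 0" "\<And>t. t < \<delta> \<Longrightarrow> cnt K a c t = 0"
proof -
  define F where "F = {k\<in>K. cmod (a k - c) \<le> 1}"
  have fF: "finite F" unfolding F_def by (rule finite_cnt_set[OF fin])
  define \<delta> where "\<delta> = Min (insert 1 ((\<lambda>k. cmod (a k - c)) ` F))"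
  have "\<delta> > 0" unfolding \<delta>_def using fF nz by (subst Min_gr_iff) (auto simp: F_def)
  moreover have "cnt K a c t = 0" if "t < \<delta>" for t
  proof -
    have empty: "{k\<in>K. cmod (a k - c) \<le> t} = {}"
    proof safe
      fix k assume k: "k \<in> K" "cmod (a k - c) \<le> t"
      have "\<delta> \<le> 1" unfolding \<delta>_def using fF by (intro Min_le) auto
      then have "k \<in> F" using k that by (auto simp: F_def)
      then have "\<delta> \<le> cmod (a k - c)" unfolding \<delta>_def using fF by (intro Min_le) auto
      then show "k \<in> {}" using k that by linarith
    qed
    show ?thesis unfolding cnt_def empty by simp
  qed
  ultimately show ?thesis using that by blast
qed

lemma cnt_le_linear:
  assumes fin: "\<And>R. finite {k\<in>K. cmod (a k) \<le> R}"
    and nz: "\<And>k. k \<in> K \<Longrightarrow> a k \<noteq> 0"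
    and growth: "(\<lambda>t. cnt K a 0 t) \<in> O[at_top](\<lambda>t. t)"
  obtains C where "C \<ge> 0" "\<And>t. t \<ge> 0 \<Longrightarrow> cnt K a 0 t \<le> C * t"
proof -
  from growth obtain c where c: "c > 0" "eventually (\<lambda>t. norm (cnt K a 0 t) \<le> c * norm t) at_top"
    by (rule landau_o.bigE)
  then obtain t0 where t0: "\<And>t. t \<ge> t0 \<Longrightarrow> cnt K a 0 t \<le> c * \<bar>t\<bar>"
    by (auto simp: eventually_at_top_linorder cnt_def)
  obtain \<delta> where \<delta>: "\<delta> > 0" "\<And>t. t < \<delta> \<Longrightarrow> cnt K a 0 t = 0"
    using cnt_eq_0_near_0[OF fin nz] by blast
  define C where "C = max c (cnt K a 0 t0 / \<delta>)"
  have "C \<ge> 0" using c by (simp add: C_def)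
  moreover have "cnt K a 0 t \<le> C * t" if "t \<ge> 0" for t
  proof (cases "t < \<delta>")
    case True
    then show ?thesis using \<delta> that \<open>C \<ge> 0\<close> by simp
  next
    case False
    show ?thesis
    proof (cases "t \<ge> t0")
      case True
      then have "cnt K a 0 t \<le> c * t" using t0 that by fastforce
      also have "\<dots> \<le> C * t" using that by (intro mult_right_mono) (auto simp: C_def)
      finally show ?thesis .
    next
      case below: False
      have "cnt K a 0 t \<le> cnt K a 0 t0" using below by (intro cnt_mono[OF fin]) simp
      also have "\<dots> = (cnt K a 0 t0 / \<delta>) * \<delta>" using \<delta> by simp
      also have "\<dots> \<le> C * t" using False \<delta> \<open>C \<ge> 0\<close>
        by (intro mult_mono) (auto simp: C_def cnt_def)
      finally show ?thesis .
    qed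
  qed
  ultimately show ?thesis using that by blast
qed

definition thin_shells :: "nat set \<Rightarrow> (nat \<Rightarrow> complex) \<Rightarrow> bool" where
  "thin_shells K a \<longleftrightarrow> (\<forall>r\<ge>0. \<forall>\<epsilon>>0.
     eventually (\<lambda>T. cnt K a 0 (T + r) - cnt K a 0 (T - r) \<le> \<epsilon> * T) at_top)"

lemma thin_shellsD:
  "thin_shells K a \<Longrightarrow> r \<ge> 0 \<Longrightarrow> \<epsilon> > 0 \<Longrightarrow>
     eventually (\<lambda>T. cnt K a 0 (T + r) - cnt K a 0 (T - r) \<le> \<epsilon> * T) at_top"
  unfolding thin_shells_def by blast

lemma thin_shells_if_small_increments:
  assumes fin: "\<And>R. finite {k\<in>K. cmod (a k) \<le> R}"
    and incr: "(\<lambda>t. cnt K a 0 (t + 1) - cnt K a 0 t) \<in> o[at_top](\<lambda>t. t)"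
  shows "thin_shells K a"
  unfolding thin_shells_def
proof (intro allI impI)
  fix r \<epsilon> :: real assume r: "r \<ge> 0" and \<epsilon>: "\<epsilon> > 0"
  define m where "m = nat \<lceil>2 * r\<rceil>"
  have m: "2 * r \<le> real m" unfolding m_def by linarith
  define \<epsilon>' where "\<epsilon>' = \<epsilon> / (2 * (real m + 1))"
  have \<epsilon>': "\<epsilon>' > 0" using \<epsilon> by (simp add: \<epsilon>'_def)
  from landau_o.smallD[OF incr \<epsilon>'] obtain t0 where
    t0: "\<And>t. t \<ge> t0 \<Longrightarrow> norm (cnt K a 0 (t + 1) - cnt K a 0 t) \<le> \<epsilon>' * norm t"
    by (auto simp: eventually_at_top_linorder)
  show "eventually (\<lambda>T. cnt K a 0 (T + r) - cnt K a 0 (T - r) \<le> \<epsilon> * T) at_top"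
  proof (rule eventually_at_top_linorderI[of "max (max (t0 + r) r) (real m + 1)"])
    fix T assume T: "T \<ge> max (max (t0 + r) r) (real m + 1)"
    define s where "s = T - r"
    have telescope: "cnt K a 0 (s + real m) - cnt K a 0 s =
        (\<Sum>j<m. cnt K a 0 (s + real j + 1) - cnt K a 0 (s + real j))"
      by (induction m) (simp_all add: algebra_simps)
    have "(\<Sum>j<m. cnt K a 0 (s + real j + 1) - cnt K a 0 (s + real j)) \<le> (\<Sum>j<m. \<epsilon>' * (T + real m))"
    proof (rule sum_mono)
      fix j assume j: "j \<in> {..<m}"
      have "s + real j \<ge> t0" using T r by (simp add: s_def)
      then have "cnt K a 0 (s + real j + 1) - cnt K a 0 (s + real j) \<le> \<epsilon>' * \<bar>s + real j\<bar>"
        using t0[of "s + real j"] by (simp add: add.assoc)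
      also have "\<dots> \<le> \<epsilon>' * (T + real m)"
        using T r j \<epsilon>' by (intro mult_left_mono) (auto simp: s_def)
      finally show "cnt K a 0 (s + real j + 1) - cnt K a 0 (s + real j) \<le> \<epsilon>' * (T + real m)" .
    qed
    also have "\<dots> = real m * \<epsilon>' * (T + real m)" by simp
    also have "\<dots> \<le> real m * \<epsilon>' * (2 * T)"
      using T \<epsilon>' by (intro mult_left_mono) auto
    also have "\<dots> \<le> \<epsilon> * T"
    proof -
      have "real m * \<epsilon>' * 2 \<le> \<epsilon>" using \<epsilon> by (simp add: \<epsilon>'_def field_simps)
      moreover have "T \<ge> 0" using T by simp
      ultimately have "(real m * \<epsilon>' * 2) * T \<le> \<epsilon> * T" by (rule mult_right_mono)
      then show ?thesis by (simp add: algebra_simps)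
    qed
    finally have "cnt K a 0 (s + real m) - cnt K a 0 s \<le> \<epsilon> * T" using telescope by simp
    moreover have "cnt K a 0 (T + r) \<le> cnt K a 0 (s + real m)"
      using m by (intro cnt_mono[OF fin]) (simp add: s_def)
    ultimately show "cnt K a 0 (T + r) - cnt K a 0 (T - r) \<le> \<epsilon> * T" by (simp add: s_def)
  qed
qed

lemma thin_shells_subset:
  assumes fin: "\<And>R. finite {k\<in>K. cmod (a k) \<le> R}"
    and thin: "thin_shells K a" and "K' \<subseteq> K"
  shows "thin_shells K' a"
  unfolding thin_shells_def
proof (intro allI impI)
  fix r \<epsilon> :: real assume r: "r \<ge> 0" and \<epsilon>: "\<epsilon> > 0"
  have fin': "\<And>R. finite {k\<in>K'. cmod (a k) \<le> R}"
    using \<open>K' \<subseteq> K\<close> by (blast intro: finite_subset[OF _ fin])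
  show "eventually (\<lambda>T. cnt K' a 0 (T + r) - cnt K' a 0 (T - r) \<le> \<epsilon> * T) at_top"
    using thin_shellsD[OF thin r \<epsilon>]
  proof eventually_elim
    case (elim T)
    have "cnt K' a 0 (T + r) - cnt K' a 0 (T - r)
        = real (card {k\<in>K'. T - r < cmod (a k - 0) \<and> cmod (a k - 0) \<le> T + r})"
      by (rule card_shell_eq_cnt_diff[OF fin', symmetric]) (use r in simp)
    also have "\<dots> \<le> real (card {k\<in>K. T - r < cmod (a k - 0) \<and> cmod (a k - 0) \<le> T + r})"
      using \<open>K' \<subseteq> K\<close>
      by (intro of_nat_mono card_mono) (auto intro: finite_subset[OF _ finite_cnt_set[OF fin, of 0 "T + r"]])
    also have "\<dots> = cnt K a 0 (T + r) - cnt K a 0 (T - r)"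
      by (rule card_shell_eq_cnt_diff[OF fin]) (use r in simp)
    finally show ?case using elim by linarith
  qed
qed

section \<open>Convergence of the canonical product\<close>

locale lindelof_sequence =
  fixes K :: "nat set" and a :: "nat \<Rightarrow> complex" and C :: real and L :: complex
  assumes nonzero: "\<And>k. k \<in> K \<Longrightarrow> a k \<noteq> 0"
    and finite_le: "\<And>R. finite {k\<in>K. cmod (a k) \<le> R}"
    and sum_inverse_tendsto: "((\<lambda>R::real. \<Sum>k\<in>{k\<in>K. cmod (a k) < R}. 1 / a k) \<longlongrightarrow> L) at_top"
    and C_nonneg: "C \<ge> 0"
    and cnt_le: "\<And>t. t \<ge> 0 \<Longrightarrow> cnt K a 0 t \<le> C * t"
begin

abbreviation annulus :: "real \<Rightarrow> real \<Rightarrow> nat set" where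
  "annulus R R' \<equiv> {k\<in>K. R \<le> cmod (a k) \<and> cmod (a k) < R'}"

lemma finite_lt: "finite {k\<in>K. cmod (a k) < R}"
  by (rule finite_subset[OF _ finite_le[of R]]) auto

lemma finite_annulus: "finite (annulus R R')"
  by (rule finite_subset[OF _ finite_le[of R']]) auto

lemma sum_split_annulus:
  assumes "R \<le> R'"
  shows "(\<Sum>k\<in>{k\<in>K. cmod (a k) < R'}. f k) = (\<Sum>k\<in>{k\<in>K. cmod (a k) < R}. f k) + (\<Sum>k\<in>annulus R R'. f k)"
proof -
  have "{k\<in>K. cmod (a k) < R'} = {k\<in>K. cmod (a k) < R} \<union> annulus R R'"
    using assms by auto
  then show ?thesis
    by (simp add: sum.union_disjoint[OF finite_lt finite_annulus] disjoint_iff)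
qed

lemma prod_split_annulus:
  assumes "R \<le> R'"
  shows "(\<Prod>k\<in>{k\<in>K. cmod (a k) < R'}. f k) = (\<Prod>k\<in>{k\<in>K. cmod (a k) < R}. f k) * (\<Prod>k\<in>annulus R R'. f k)"
proof -
  have "{k\<in>K. cmod (a k) < R'} = {k\<in>K. cmod (a k) < R} \<union> annulus R R'"
    using assms by auto
  then show ?thesis
    by (simp add: prod.union_disjoint[OF finite_lt finite_annulus] disjoint_iff)
qed

lemma partial_prod_split_annulus:
  assumes "R \<le> R'"
  shows "partial_prod K a R' z = partial_prod K a R z * (\<Prod>k\<in>annulus R R'. 1 - z / a k)"
  unfolding partial_prod_def by (rule prod_split_annulus[OF assms])

lemma sum_inverse_square_annulus_le:
  assumes R: "0 < R" "R \<le> R'"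
  shows "(\<Sum>k\<in>annulus R R'. 1 / cmod (a k) ^ 2) \<le> 2 * C / R"
proof -
  define F where "F = annulus R R'"
  have "finite F" unfolding F_def by (rule finite_annulus)
  then have parts: "((\<lambda>t. real (card {k\<in>F. cmod (a k) \<le> t}) * (2 / t ^ 3)) has_integral
       (\<Sum>k\<in>{k\<in>F. cmod (a k) \<le> R'}. (- 1 / R' ^ 2) - (- 1 / cmod (a k) ^ 2))) {R..R'}"
  proof (rule has_integral_card_le_mult_deriv)
    fix t k assume "k \<in> F" "cmod (a k) \<le> t"
    then have t: "t > 0" using R by (auto simp: F_def)
    show "((\<lambda>t. - 1 / t ^ 2) has_real_derivative 2 / t ^ 3) (at t)"
      using t by (auto intro!: derivative_eq_intros simp: field_simps power2_eq_square power3_eq_cube)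
  qed (auto simp: F_def)
  have bound: "((\<lambda>t. 2 * C / t ^ 2) has_integral ((- 2 * C / R') - (- 2 * C / R))) {R..R'}"
  proof (rule fundamental_theorem_of_calculus)
    fix t assume "t \<in> {R..R'}"
    then have t: "t > 0" using R by auto
    show "((\<lambda>t. - 2 * C / t) has_vector_derivative 2 * C / t ^ 2) (at t within {R..R'})"
      unfolding has_real_derivative_iff_has_vector_derivative[symmetric]
      using t by (auto intro!: derivative_eq_intros simp: field_simps power2_eq_square)
  qed (use R in simp)
  have card_le: "real (card {k\<in>F. cmod (a k) \<le> t}) \<le> C * t" if "t \<ge> 0" for t
  proof -
    have "real (card {k\<in>F. cmod (a k) \<le> t}) \<le> cnt K a 0 t"
      unfolding cnt_def using finite_cnt_set[OF finite_le, of 0 t]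
      by (intro of_nat_mono card_mono) (auto simp: F_def)
    also have "\<dots> \<le> C * t" using cnt_le that by simp
    finally show ?thesis .
  qed
  have "(\<Sum>k\<in>{k\<in>F. cmod (a k) \<le> R'}. (- 1 / R' ^ 2) - (- 1 / cmod (a k) ^ 2)) \<le> (- 2 * C / R') - (- 2 * C / R)"
  proof (rule has_integral_le[OF parts bound])
    fix t assume "t \<in> {R..R'}"
    then have t: "t > 0" using R by auto
    have "real (card {k\<in>F. cmod (a k) \<le> t}) * (2 / t ^ 3) \<le> C * t * (2 / t ^ 3)"
      using card_le[of t] t by (intro mult_right_mono) auto
    also have "\<dots> = 2 * C / t ^ 2" using t by (simp add: field_simps power2_eq_square power3_eq_cube)
    finally show "real (card {k\<in>F. cmod (a k) \<le> t}) * (2 / t ^ 3) \<le> 2 * C / t ^ 2" .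
  qed
  moreover have "{k\<in>F. cmod (a k) \<le> R'} = F" by (auto simp: F_def)
  ultimately have sum_le: "(\<Sum>k\<in>F. 1 / cmod (a k) ^ 2) \<le> real (card F) / R' ^ 2 + 2 * C / R - 2 * C / R'"
    by (simp add: sum_subtractf)
  have "card {k\<in>F. cmod (a k) \<le> R'} = card F" using \<open>{k\<in>F. cmod (a k) \<le> R'} = F\<close> by simp
  then have "real (card F) / R' ^ 2 \<le> C * R' / R' ^ 2"
    using card_le[of R'] R by (intro divide_right_mono) auto
  also have "\<dots> \<le> 2 * C / R'" using R C_nonneg by (simp add: power2_eq_square divide_right_mono)
  finally show ?thesis using sum_le unfolding F_def by linarith
qed

lemma sum_inverse_annulus_small:
  assumes "\<delta> > 0"
  obtains R0 where "\<And>R R'. R0 \<le> R \<Longrightarrow> R \<le> R' \<Longrightarrow> cmod (\<Sum>k\<in>annulus R R'. 1 / a k) \<le> \<delta>"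
proof -
  from sum_inverse_tendsto[THEN tendstoD, of "\<delta> / 2"] assms obtain R0 where
    R0: "\<And>R. R \<ge> R0 \<Longrightarrow> dist (\<Sum>k\<in>{k\<in>K. cmod (a k) < R}. 1 / a k) L < \<delta> / 2"
    by (auto simp: eventually_at_top_linorder)
  have "cmod (\<Sum>k\<in>annulus R R'. 1 / a k) \<le> \<delta>" if "R0 \<le> R" "R \<le> R'" for R R'
  proof -
    have "cmod (\<Sum>k\<in>annulus R R'. 1 / a k)
        = dist (\<Sum>k\<in>{k\<in>K. cmod (a k) < R'}. 1 / a k) (\<Sum>k\<in>{k\<in>K. cmod (a k) < R}. 1 / a k)"
      using sum_split_annulus[OF \<open>R \<le> R'\<close>, of "\<lambda>k. 1 / a k"] by (simp add: dist_norm)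
    also have "\<dots> \<le> dist (\<Sum>k\<in>{k\<in>K. cmod (a k) < R'}. 1 / a k) L + dist (\<Sum>k\<in>{k\<in>K. cmod (a k) < R}. 1 / a k) L"
      by (rule dist_triangle2)
    finally show ?thesis using R0[of R] R0[of R'] that by linarith
  qed
  then show ?thesis using that by blast
qed

lemma sum_inverse_bounded:
  obtains M where "M \<ge> 0" "\<And>R. cmod (\<Sum>k\<in>{k\<in>K. cmod (a k) < R}. 1 / a k) \<le> M"
proof -
  from sum_inverse_tendsto[THEN tendstoD, of 1] obtain R0 where
    R0: "\<And>R. R \<ge> R0 \<Longrightarrow> dist (\<Sum>k\<in>{k\<in>K. cmod (a k) < R}. 1 / a k) L < 1"
    by (auto simp: eventually_at_top_linorder)
  define S0 where "S0 = (\<Sum>k\<in>{k\<in>K. cmod (a k) < R0}. cmod (1 / a k))"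
  have "S0 \<ge> 0" unfolding S0_def by (rule sum_nonneg) auto
  have "cmod (\<Sum>k\<in>{k\<in>K. cmod (a k) < R}. 1 / a k) \<le> cmod L + 1 + S0" for R
  proof (cases "R \<ge> R0")
    case True
    have "cmod (\<Sum>k\<in>{k\<in>K. cmod (a k) < R}. 1 / a k) \<le> cmod L + dist (\<Sum>k\<in>{k\<in>K. cmod (a k) < R}. 1 / a k) L"
      using norm_triangle_sub[of "\<Sum>k\<in>{k\<in>K. cmod (a k) < R}. 1 / a k" L] by (simp add: dist_norm)
    then show ?thesis using R0[OF True] \<open>S0 \<ge> 0\<close> by simp
  next
    case False
    have "cmod (\<Sum>k\<in>{k\<in>K. cmod (a k) < R}. 1 / a k) \<le> (\<Sum>k\<in>{k\<in>K. cmod (a k) < R}. cmod (1 / a k))"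
      by (rule norm_sum)
    also have "\<dots> \<le> S0"
      unfolding S0_def using False by (intro sum_mono2[OF finite_lt]) auto
    finally show ?thesis using norm_ge_zero[of L] by linarith
  qed
  moreover have "cmod L + 1 + S0 \<ge> 0" using \<open>S0 \<ge> 0\<close> by simp
  ultimately show ?thesis using that by blast
qed

text \<open>The key estimate: \<open>Ln (1 - w) = -w + O(|w|\<^sup>2)\<close> for \<open>|w| \<le> 1/2\<close>.\<close>

lemma prod_one_minus_eq_exp:
  assumes F: "finite F" "F \<subseteq> K" and big: "\<And>k. k \<in> F \<Longrightarrow> 2 * cmod z \<le> cmod (a k)"
  obtains u where "(\<Prod>k\<in>F. 1 - z / a k) = exp u"
    "cmod u \<le> cmod z * cmod (\<Sum>k\<in>F. 1 / a k) + 2 * cmod z ^ 2 * (\<Sum>k\<in>F. 1 / cmod (a k) ^ 2)"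
proof -
  have small: "cmod (z / a k) \<le> 1/2" if "k \<in> F" for k
  proof -
    have "a k \<noteq> 0" using that F nonzero by auto
    then show ?thesis using big[OF that] by (simp add: norm_divide field_simps)
  qed
  define u where "u = (\<Sum>k\<in>F. Ln (1 - z / a k))"
  have "exp u = (\<Prod>k\<in>F. exp (Ln (1 - z / a k)))" unfolding u_def by (rule exp_sum[OF F(1)])
  also have "\<dots> = (\<Prod>k\<in>F. 1 - z / a k)"
  proof (rule prod.cong[OF refl])
    fix k assume k: "k \<in> F"
    have "1 - z / a k \<noteq> 0"
    proof
      assume "1 - z / a k = 0"
      then have "z / a k = 1" by simp
      then show False using small[OF k] by simp
    qed
    then show "exp (Ln (1 - z / a k)) = 1 - z / a k" by simp
  qed
  finally have prod_eq: "(\<Prod>k\<in>F. 1 - z / a k) = exp u" ..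
  have each: "cmod (Ln (1 - z / a k) + z / a k) \<le> 2 * (cmod z ^ 2 * (1 / cmod (a k) ^ 2))"
    if k: "k \<in> F" for k
  proof -
    have "cmod (Ln (1 + (- (z / a k))) - (- (z / a k))) \<le> cmod (- (z / a k)) ^ 2 / (1 - cmod (- (z / a k)))"
      by (rule Ln_approx_linear) (use small[OF k] in simp)
    also have "\<dots> \<le> cmod (z / a k) ^ 2 / (1/2)"
      unfolding norm_minus_cancel using small[OF k] by (intro divide_left_mono) auto
    also have "\<dots> = 2 * (cmod z ^ 2 * (1 / cmod (a k) ^ 2))"
      by (simp add: norm_divide power_divide)
    finally show ?thesis by simp
  qed
  have "u = - (z * (\<Sum>k\<in>F. 1 / a k)) + (\<Sum>k\<in>F. Ln (1 - z / a k) + z / a k)"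
    by (simp add: u_def sum.distrib sum_distrib_left)
  then have "cmod u \<le> cmod (z * (\<Sum>k\<in>F. 1 / a k)) + cmod (\<Sum>k\<in>F. Ln (1 - z / a k) + z / a k)"
    by (metis norm_minus_cancel norm_triangle_ineq)
  also have "cmod (\<Sum>k\<in>F. Ln (1 - z / a k) + z / a k) \<le> (\<Sum>k\<in>F. 2 * (cmod z ^ 2 * (1 / cmod (a k) ^ 2)))"
    by (rule order_trans[OF norm_sum sum_mono]) (rule each)
  also have "(\<Sum>k\<in>F. 2 * (cmod z ^ 2 * (1 / cmod (a k) ^ 2))) = 2 * cmod z ^ 2 * (\<Sum>k\<in>F. 1 / cmod (a k) ^ 2)"
    by (simp add: sum_distrib_left mult.assoc)
  finally show ?thesis using that prod_eq by (simp add: norm_mult)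
qed

lemma prod_annulus_near_1:
  assumes \<rho>: "\<rho> \<ge> 0" and \<epsilon>: "\<epsilon> > 0"
  obtains R0 where "\<And>R R' z. R0 \<le> R \<Longrightarrow> R \<le> R' \<Longrightarrow> cmod z \<le> \<rho> \<Longrightarrow>
            cmod ((\<Prod>k\<in>annulus R R'. 1 - z / a k) - 1) \<le> \<epsilon>"
proof -
  define \<eta> where "\<eta> = min (1/2) (\<epsilon>/2)"
  have \<eta>: "\<eta> > 0" "\<eta> \<le> 1/2" "\<eta> \<le> \<epsilon>/2" using \<epsilon> by (auto simp: \<eta>_def)
  define \<delta> where "\<delta> = \<eta> / (2 * (\<rho> + 1))"
  have \<delta>: "\<delta> > 0" using \<eta> \<rho> by (simp add: \<delta>_def)
  obtain R1 where R1: "\<And>R R'. R1 \<le> R \<Longrightarrow> R \<le> R' \<Longrightarrow> cmod (\<Sum>k\<in>annulus R R'. 1 / a k) \<le> \<delta>"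
    using sum_inverse_annulus_small[OF \<delta>] by blast
  define R0 where "R0 = max (max R1 (2 * \<rho> + 1)) (8 * \<rho>^2 * C / \<eta> + 1)"
  have "R0 > 0" unfolding R0_def using \<rho> by (simp add: less_max_iff_disj)
  have "cmod ((\<Prod>k\<in>annulus R R'. 1 - z / a k) - 1) \<le> \<epsilon>"
    if R: "R0 \<le> R" and RR': "R \<le> R'" and z: "cmod z \<le> \<rho>" for R R' z
  proof -
    have Rpos: "R > 0" using R \<open>R0 > 0\<close> by simp
    have big: "2 * cmod z \<le> cmod (a k)" if "k \<in> annulus R R'" for k
      using that z R by (auto simp: R0_def)
    obtain u where u: "(\<Prod>k\<in>annulus R R'. 1 - z / a k) = exp u"
      "cmod u \<le> cmod z * cmod (\<Sum>k\<in>annulus R R'. 1 / a k) + 2 * cmod z ^ 2 * (\<Sum>k\<in>annulus R R'. 1 / cmod (a k) ^ 2)"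
      using prod_one_minus_eq_exp[OF finite_annulus _ big] by blast
    have "cmod z * cmod (\<Sum>k\<in>annulus R R'. 1 / a k) \<le> \<rho> * \<delta>"
      using z R1[of R R'] R RR' \<rho> by (intro mult_mono) (auto simp: R0_def)
    also have "\<rho> * \<delta> = (\<rho> / (\<rho> + 1)) * (\<eta> / 2)" using \<rho> by (simp add: \<delta>_def field_simps)
    also have "\<dots> \<le> \<eta> / 2" using \<rho> \<eta> by (intro mult_left_le_one_le) auto
    finally have t1: "cmod z * cmod (\<Sum>k\<in>annulus R R'. 1 / a k) \<le> \<eta> / 2" .
    have "2 * cmod z ^ 2 * (\<Sum>k\<in>annulus R R'. 1 / cmod (a k) ^ 2) \<le> 2 * \<rho> ^ 2 * (2 * C / R)"
      using z sum_inverse_square_annulus_le[OF Rpos RR'] by (intro mult_mono power_mono) (auto intro: sum_nonneg)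
    also have "\<dots> \<le> \<eta> / 2"
    proof -
      have "8 * \<rho>^2 * C / \<eta> \<le> R" using R by (simp add: R0_def)
      then have "8 * \<rho>^2 * C \<le> R * \<eta>" using \<eta> by (simp add: field_simps)
      then show ?thesis using Rpos by (simp add: field_simps)
    qed
    finally have "cmod u \<le> \<eta>" using u(2) t1 by linarith
    then have "cmod (exp u - 1) \<le> 3 / 2 * cmod u"
      using \<eta> by (intro norm_exp_bounds(2)) linarith
    also have "\<dots> \<le> \<epsilon>" using \<open>cmod u \<le> \<eta>\<close> \<eta> by linarith
    finally show ?thesis using u(1) by simp
  qed
  then show ?thesis using that by blast
qed

lemma norm_partial_prod_le:
  assumes "cmod z \<le> \<rho>"
  shows "cmod (partial_prod K a R z) \<le> (\<Prod>k\<in>{k\<in>K. cmod (a k) < R}. 1 + \<rho> / cmod (a k))"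
proof -
  have "cmod (partial_prod K a R z) \<le> (\<Prod>k\<in>{k\<in>K. cmod (a k) < R}. cmod (1 - z / a k))"
    unfolding partial_prod_def by (rule norm_prod_le)
  also have "\<dots> \<le> (\<Prod>k\<in>{k\<in>K. cmod (a k) < R}. 1 + \<rho> / cmod (a k))"
  proof (rule prod_mono, safe)
    fix k assume k: "k \<in> K" "cmod (a k) < R"
    have "cmod (1 - z / a k) \<le> 1 + cmod (z / a k)" by (metis norm_one norm_triangle_ineq4)
    also have "\<dots> \<le> 1 + \<rho> / cmod (a k)" using assms by (simp add: norm_divide divide_right_mono)
    finally show "cmod (1 - z / a k) \<le> 1 + \<rho> / cmod (a k)" .
  qed simp
  finally show ?thesis .
qed

lemma partial_prod_uniformly_Cauchy:
  assumes \<rho>: "\<rho> \<ge> 0" and \<epsilon>: "\<epsilon> > 0"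
  obtains R0 where "\<And>R R' z. R0 \<le> R \<Longrightarrow> R \<le> R' \<Longrightarrow> cmod z \<le> \<rho> \<Longrightarrow>
            cmod (partial_prod K a R' z - partial_prod K a R z) \<le> \<epsilon>"
proof -
  obtain R1 where R1: "\<And>R R' z. R1 \<le> R \<Longrightarrow> R \<le> R' \<Longrightarrow> cmod z \<le> \<rho> \<Longrightarrow>
            cmod ((\<Prod>k\<in>annulus R R'. 1 - z / a k) - 1) \<le> 1"
    using prod_annulus_near_1[OF \<rho>, of 1] by auto
  define B where "B = (\<Prod>k\<in>{k\<in>K. cmod (a k) < R1}. 1 + \<rho> / cmod (a k))"
  have B0: "B \<ge> 0" unfolding B_def using \<rho> by (intro prod_nonneg) auto
  have bounded: "cmod (partial_prod K a R z) \<le> 2 * B" if "R1 \<le> R" "cmod z \<le> \<rho>" for R z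
  proof -
    have "cmod (\<Prod>k\<in>annulus R1 R. 1 - z / a k) \<le> 2"
      using R1[of R1 R z] that norm_triangle_ineq2[of "\<Prod>k\<in>annulus R1 R. 1 - z / a k" 1] by simp
    moreover have "cmod (partial_prod K a R1 z) \<le> B"
      unfolding B_def by (rule norm_partial_prod_le) (use that in simp)
    ultimately have "cmod (partial_prod K a R1 z) * cmod (\<Prod>k\<in>annulus R1 R. 1 - z / a k) \<le> B * 2"
      using B0 by (intro mult_mono) auto
    then show ?thesis using partial_prod_split_annulus[OF that(1), of z] by (simp add: norm_mult mult.commute)
  qed
  have "\<epsilon> / (2 * B + 1) > 0" using \<epsilon> B0 by simp
  from prod_annulus_near_1[OF \<rho> this] obtain R2 where
    R2: "\<And>R R' z. R2 \<le> R \<Longrightarrow> R \<le> R' \<Longrightarrow> cmod z \<le> \<rho> \<Longrightarrow>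
            cmod ((\<Prod>k\<in>annulus R R'. 1 - z / a k) - 1) \<le> \<epsilon> / (2 * B + 1)"
    by auto
  have "cmod (partial_prod K a R' z - partial_prod K a R z) \<le> \<epsilon>"
    if R: "max R1 R2 \<le> R" and RR': "R \<le> R'" and z: "cmod z \<le> \<rho>" for R R' z
  proof -
    have "partial_prod K a R' z - partial_prod K a R z
        = partial_prod K a R z * ((\<Prod>k\<in>annulus R R'. 1 - z / a k) - 1)"
      using partial_prod_split_annulus[OF RR', of z] by (simp add: algebra_simps)
    then have "cmod (partial_prod K a R' z - partial_prod K a R z)
        = cmod (partial_prod K a R z) * cmod ((\<Prod>k\<in>annulus R R'. 1 - z / a k) - 1)"
      by (simp add: norm_mult)
    also have "\<dots> \<le> (2 * B) * (\<epsilon> / (2 * B + 1))"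
      using bounded[of R z] R2[of R R' z] R z RR' B0 by (intro mult_mono) auto
    also have "\<dots> \<le> \<epsilon>" using B0 \<epsilon> by (simp add: field_simps)
    finally show ?thesis .
  qed
  then show ?thesis using that by blast
qed

definition canonical_product :: "complex \<Rightarrow> complex" where
  "canonical_product z = lim (\<lambda>n::nat. partial_prod K a (real n) z)"

lemma partial_prod_nat_tendsto:
  "(\<lambda>n::nat. partial_prod K a (real n) z) \<longlonglongrightarrow> canonical_product z"
proof -
  have "Cauchy (\<lambda>n::nat. partial_prod K a (real n) z)"
  proof (rule metric_CauchyI)
    fix e :: real assume e: "e > 0"
    obtain R0 where R0: "\<And>R R' w. R0 \<le> R \<Longrightarrow> R \<le> R' \<Longrightarrow> cmod w \<le> cmod z \<Longrightarrow>
          cmod (partial_prod K a R' w - partial_prod K a R w) \<le> e / 2"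
      by (rule partial_prod_uniformly_Cauchy[of "cmod z" "e/2"]) (use e in auto)
    have "dist (partial_prod K a (real m) z) (partial_prod K a (real n) z) < e"
      if "m \<ge> nat \<lceil>R0\<rceil>" "n \<ge> nat \<lceil>R0\<rceil>" for m n :: nat
    proof -
      have "real m \<ge> R0" "real n \<ge> R0" using that by linarith+
      then show ?thesis
        using R0[of "real m" "real n" z] R0[of "real n" "real m" z] e
        by (cases "m \<le> n") (auto simp: dist_norm norm_minus_commute)
    qed
    then show "\<exists>M. \<forall>m\<ge>M. \<forall>n\<ge>M. dist (partial_prod K a (real m) z) (partial_prod K a (real n) z) < e"
      by blast
  qed
  then show ?thesis unfolding canonical_product_def by (simp add: Cauchy_convergent_iff convergent_LIMSEQ_iff)
qed

lemma partial_prod_uniform_approx: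
  assumes \<rho>: "\<rho> \<ge> 0" and \<epsilon>: "\<epsilon> > 0"
  obtains R0 where "\<And>R z. R0 \<le> R \<Longrightarrow> cmod z \<le> \<rho> \<Longrightarrow> cmod (partial_prod K a R z - canonical_product z) \<le> \<epsilon>"
proof -
  obtain R0 where R0: "\<And>R R' z. R0 \<le> R \<Longrightarrow> R \<le> R' \<Longrightarrow> cmod z \<le> \<rho> \<Longrightarrow>
            cmod (partial_prod K a R' z - partial_prod K a R z) \<le> \<epsilon>"
    using partial_prod_uniformly_Cauchy[OF \<rho> \<epsilon>] by blast
  have "cmod (partial_prod K a R z - canonical_product z) \<le> \<epsilon>" if R: "R0 \<le> R" and z: "cmod z \<le> \<rho>" for R z
  proof (rule tendsto_upperbound)
    show "((\<lambda>n. cmod (partial_prod K a R z - partial_prod K a (real n) z))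
        \<longlongrightarrow> cmod (partial_prod K a R z - canonical_product z)) sequentially"
      by (intro tendsto_intros partial_prod_nat_tendsto)
    show "eventually (\<lambda>n. cmod (partial_prod K a R z - partial_prod K a (real n) z) \<le> \<epsilon>) sequentially"
    proof (rule eventually_sequentiallyI[of "nat \<lceil>R\<rceil>"])
      fix n assume "nat \<lceil>R\<rceil> \<le> n"
      then have "R \<le> real n" by linarith
      then show "cmod (partial_prod K a R z - partial_prod K a (real n) z) \<le> \<epsilon>"
        using R0[OF R _ z, of "real n"] by (simp add: norm_minus_commute)
    qed
  qed simp
  then show ?thesis using that by blast
qed

lemma partial_prod_tendsto: "((\<lambda>R. partial_prod K a R z) \<longlongrightarrow> canonical_product z) at_top"
proof (rule tendstoI)
  fix e :: real assume "e > 0"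
  obtain R0 where R0: "\<And>R w. R0 \<le> R \<Longrightarrow> cmod w \<le> cmod z \<Longrightarrow>
      cmod (partial_prod K a R w - canonical_product w) \<le> e / 2"
    by (rule partial_prod_uniform_approx[of "cmod z" "e/2"]) (use \<open>e > 0\<close> in auto)
  show "eventually (\<lambda>R. dist (partial_prod K a R z) (canonical_product z) < e) at_top"
    using R0 \<open>e > 0\<close> by (intro eventually_at_top_linorderI[of R0]) (force simp: dist_norm)
qed

lemma canonical_product_eqI:
  "((\<lambda>R. partial_prod K a R z) \<longlongrightarrow> w) at_top \<Longrightarrow> canonical_product z = w"
  using partial_prod_tendsto[of z] by (metis tendsto_unique trivial_limit_at_top_linorder)

lemma holomorphic_partial_prod: "partial_prod K a R holomorphic_on S"
proof -
  have "(\<lambda>z. \<Prod>k\<in>{k\<in>K. cmod (a k) < R}. 1 - z / a k) holomorphic_on S"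
    using nonzero by (intro holomorphic_intros) auto
  then show ?thesis by (simp add: partial_prod_def[abs_def])
qed

lemma holomorphic_canonical_product: "canonical_product holomorphic_on UNIV"
proof -
  have "canonical_product holomorphic_on ball 0 \<rho>" if \<rho>: "\<rho> \<ge> 0" for \<rho>
  proof -
    have "uniform_limit (cball 0 \<rho>) (\<lambda>R. partial_prod K a R) canonical_product at_top"
    proof (rule uniform_limitI)
      fix e :: real assume "e > 0"
      then obtain R0 where R0: "\<And>R w. R0 \<le> R \<Longrightarrow> cmod w \<le> \<rho> \<Longrightarrow>
          cmod (partial_prod K a R w - canonical_product w) \<le> e / 2"
        using partial_prod_uniform_approx[OF \<rho>, of "e/2"] by auto
      show "\<forall>\<^sub>F R in at_top. \<forall>x\<in>cball 0 \<rho>. dist (partial_prod K a R x) (canonical_product x) < e"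
        using R0 \<open>e > 0\<close> by (intro eventually_at_top_linorderI[of R0]) (force simp: dist_norm)
    qed
    moreover have "eventually (\<lambda>R. continuous_on (cball 0 \<rho>) (partial_prod K a R)
        \<and> partial_prod K a R holomorphic_on ball 0 \<rho>) at_top"
      by (simp add: holomorphic_partial_prod holomorphic_on_imp_continuous_on)
    ultimately show ?thesis
      by (metis holomorphic_uniform_limit trivial_limit_at_top_linorder)
  qed
  then have "canonical_product field_differentiable at z" for z
    by (intro holomorphic_on_imp_differentiable_at[of _ "ball 0 (cmod z + 1)"]) auto
  then show ?thesis by (simp add: holomorphic_on_def field_differentiable_at_within)
qed

lemma canonical_product_nonzero:
  assumes "z \<notin> a ` K"
  shows "canonical_product z \<noteq> 0"
proof -
  obtain R1 where R1: "\<And>R R' w. R1 \<le> R \<Longrightarrow> R \<le> R' \<Longrightarrow> cmod w \<le> cmod z \<Longrightarrow>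
            cmod ((\<Prod>k\<in>annulus R R'. 1 - w / a k) - 1) \<le> 1/2"
    using prod_annulus_near_1[of "cmod z" "1/2"] by auto
  have nz: "partial_prod K a R1 z \<noteq> 0"
    unfolding partial_prod_def using finite_lt assms nonzero
    by (subst prod_zero_iff) (auto simp: field_simps)
  have "eventually (\<lambda>R. cmod (partial_prod K a R1 z) / 2 \<le> cmod (partial_prod K a R z)) at_top"
  proof (rule eventually_at_top_linorderI[of R1])
    fix R assume R: "R \<ge> R1"
    have "cmod (\<Prod>k\<in>annulus R1 R. 1 - z / a k) \<ge> 1/2"
      using R1[of R1 R z] R norm_triangle_ineq3[of "\<Prod>k\<in>annulus R1 R. 1 - z / a k" 1] by simp
    then have "cmod (partial_prod K a R1 z) * (1/2) \<le> cmod (partial_prod K a R1 z) * cmod (\<Prod>k\<in>annulus R1 R. 1 - z / a k)"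
      by (intro mult_left_mono) auto
    then show "cmod (partial_prod K a R1 z) / 2 \<le> cmod (partial_prod K a R z)"
      using partial_prod_split_annulus[OF R, of z] by (simp add: norm_mult)
  qed
  then have "cmod (partial_prod K a R1 z) / 2 \<le> cmod (canonical_product z)"
    by (intro tendsto_lowerbound[OF tendsto_norm[OF partial_prod_tendsto]]) simp_all
  then show ?thesis using nz by auto
qed

lemma canonical_product_eq_0:
  assumes "z \<in> a ` K"
  shows "canonical_product z = 0"
proof (rule canonical_product_eqI[OF tendsto_eventually])
  from assms obtain k where k: "k \<in> K" "z = a k" by auto
  show "eventually (\<lambda>R. partial_prod K a R z = 0) at_top"
  proof (rule eventually_at_top_linorderI[of "cmod z + 1"])
    fix R assume "R \<ge> cmod z + 1"
    then have "k \<in> {k\<in>K. cmod (a k) < R}" using k by auto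
    moreover have "1 - z / a k = 0" using k nonzero by simp
    ultimately show "partial_prod K a R z = 0"
      unfolding partial_prod_def using finite_lt by (subst prod_zero_iff) auto
  qed
qed

section \<open>Exponential type\<close>

lemma jensen_sum_le:
  assumes "\<rho> \<ge> 0"
  shows "(\<Sum>k\<in>{k\<in>K. cmod (a k) \<le> \<rho>}. ln \<rho> - ln (cmod (a k))) \<le> C * \<rho>"
proof (rule has_integral_le)
  show "((\<lambda>t. cnt K a 0 t / t) has_integral (\<Sum>k\<in>{k\<in>K. cmod (a k) \<le> \<rho>}. ln \<rho> - ln (cmod (a k)))) {0..\<rho>}"
    using has_integral_cnt_div[OF finite_le, of 0 \<rho>] nonzero by simp
  show "((\<lambda>t. C) has_integral (C * \<rho>)) {0..\<rho>}"
    using has_integral_const_real[of C 0 \<rho>] assms by (simp add: mult.commute)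
  fix t :: real assume "t \<in> {0..\<rho>}"
  then show "cnt K a 0 t / t \<le> C"
    using cnt_le[of t] C_nonneg by (cases "t = 0") (auto simp: field_simps)
qed

lemma norm_partial_prod_double_le:
  "cmod (partial_prod K a (2 * cmod z) z) \<le> exp (3 * C * cmod z)"
proof (cases "z = 0")
  case True
  then show ?thesis by (simp add: partial_prod_def)
next
  case False
  define r where "r = cmod z"
  have rpos: "r > 0" using False by (simp add: r_def)
  have "cmod (partial_prod K a (2 * r) z) \<le> (\<Prod>k\<in>{k\<in>K. cmod (a k) < 2 * r}. 1 + r / cmod (a k))"
    by (rule norm_partial_prod_le) (simp add: r_def)
  also have "\<dots> \<le> (\<Prod>k\<in>{k\<in>K. cmod (a k) < 2 * r}. 3 * r / cmod (a k))"
  proof (rule prod_mono, safe)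
    fix k assume k: "k \<in> K" "cmod (a k) < 2 * r"
    have ak: "cmod (a k) > 0" using nonzero k by simp
    show "0 \<le> 1 + r / cmod (a k)" using rpos ak by simp
    have "1 \<le> 2 * r / cmod (a k)" using k ak by (simp add: field_simps)
    moreover have "r / cmod (a k) + 2 * r / cmod (a k) = (r + 2 * r) / cmod (a k)"
      by (rule add_divide_distrib[symmetric])
    ultimately show "1 + r / cmod (a k) \<le> 3 * r / cmod (a k)" by simp
  qed
  also have "\<dots> = exp (\<Sum>k\<in>{k\<in>K. cmod (a k) < 2 * r}. ln (3 * r) - ln (cmod (a k)))"
    unfolding exp_sum[OF finite_lt]
    by (intro prod.cong refl) (use rpos nonzero in \<open>simp add: exp_diff\<close>)
  also have "(\<Sum>k\<in>{k\<in>K. cmod (a k) < 2 * r}. ln (3 * r) - ln (cmod (a k)))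
      \<le> (\<Sum>k\<in>{k\<in>K. cmod (a k) \<le> 3 * r}. ln (3 * r) - ln (cmod (a k)))"
  proof (rule sum_mono2[OF finite_le])
    show "{k\<in>K. cmod (a k) < 2 * r} \<subseteq> {k\<in>K. cmod (a k) \<le> 3 * r}" using rpos by auto
    fix k assume "k \<in> {k\<in>K. cmod (a k) \<le> 3 * r} - {k\<in>K. cmod (a k) < 2 * r}"
    then show "0 \<le> ln (3 * r) - ln (cmod (a k))" using nonzero by (simp add: ln_mono)
  qed
  also have "\<dots> \<le> C * (3 * r)" using rpos by (intro jensen_sum_le) simp
  finally show ?thesis by (simp add: r_def mult_ac)
qed

lemma norm_prod_annulus_double_le:
  assumes M: "\<And>R. cmod (\<Sum>k\<in>{k\<in>K. cmod (a k) < R}. 1 / a k) \<le> M"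
    and z: "z \<noteq> 0" and R: "2 * cmod z \<le> R"
  shows "cmod (\<Prod>k\<in>annulus (2 * cmod z) R. 1 - z / a k) \<le> exp ((2 * C + 2 * M) * cmod z)"
proof -
  define r where "r = cmod z"
  have rpos: "r > 0" using z by (simp add: r_def)
  have big: "2 * cmod z \<le> cmod (a k)" if "k \<in> annulus (2 * cmod z) R" for k
    using that by simp
  obtain u where u: "(\<Prod>k\<in>annulus (2 * cmod z) R. 1 - z / a k) = exp u"
    "cmod u \<le> cmod z * cmod (\<Sum>k\<in>annulus (2 * cmod z) R. 1 / a k)
             + 2 * cmod z ^ 2 * (\<Sum>k\<in>annulus (2 * cmod z) R. 1 / cmod (a k) ^ 2)"
    by (rule prod_one_minus_eq_exp[OF finite_annulus _ big]) auto
  have "(\<Sum>k\<in>annulus (2 * r) R. 1 / a k)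
      = (\<Sum>k\<in>{k\<in>K. cmod (a k) < R}. 1 / a k) - (\<Sum>k\<in>{k\<in>K. cmod (a k) < 2 * r}. 1 / a k)"
    using sum_split_annulus[OF R[folded r_def], of "\<lambda>k. 1 / a k"] by simp
  then have "cmod (\<Sum>k\<in>annulus (2 * r) R. 1 / a k) \<le> 2 * M"
    using M[of R] M[of "2 * r"] norm_triangle_ineq4[of "\<Sum>k\<in>{k\<in>K. cmod (a k) < R}. 1 / a k"]
    by (smt (verit))
  then have "cmod z * cmod (\<Sum>k\<in>annulus (2 * r) R. 1 / a k) \<le> r * (2 * M)"
    using rpos by (simp add: r_def[symmetric])
  moreover have "(\<Sum>k\<in>annulus (2 * r) R. 1 / cmod (a k) ^ 2) \<le> C / r"
    using sum_inverse_square_annulus_le[of "2 * r" R] rpos R by (simp add: r_def)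
  then have "2 * cmod z ^ 2 * (\<Sum>k\<in>annulus (2 * r) R. 1 / cmod (a k) ^ 2) \<le> 2 * r ^ 2 * (C / r)"
    using rpos by (simp add: r_def[symmetric] del: times_divide_eq_right)
  ultimately have "cmod u \<le> r * (2 * M) + 2 * r ^ 2 * (C / r)"
    using u(2) by (simp add: r_def)
  also have "\<dots> = (2 * C + 2 * M) * r" using rpos by (simp add: field_simps power2_eq_square)
  finally show ?thesis
    using u(1) norm_exp[of u] by (simp add: r_def)
qed

lemma canonical_product_exponential_type:
  obtains B where "\<And>z. cmod (canonical_product z) \<le> exp (B * cmod z)"
proof -
  obtain M where M: "M \<ge> 0" "\<And>R. cmod (\<Sum>k\<in>{k\<in>K. cmod (a k) < R}. 1 / a k) \<le> M"
    using sum_inverse_bounded by blast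
  have "cmod (canonical_product z) \<le> exp ((5 * C + 2 * M) * cmod z)" for z
  proof (cases "z = 0")
    case True
    have "canonical_product 0 = 1" by (rule canonical_product_eqI) (simp add: partial_prod_def)
    then show ?thesis using True by simp
  next
    case False
    have "cmod (partial_prod K a R z) \<le> exp ((5 * C + 2 * M) * cmod z)" if R: "R \<ge> 2 * cmod z" for R
    proof -
      have "cmod (partial_prod K a R z)
          = cmod (partial_prod K a (2 * cmod z) z) * cmod (\<Prod>k\<in>annulus (2 * cmod z) R. 1 - z / a k)"
        using partial_prod_split_annulus[OF R, of z] by (simp add: norm_mult)
      also have "\<dots> \<le> exp (3 * C * cmod z) * exp ((2 * C + 2 * M) * cmod z)"
        by (intro mult_mono norm_partial_prod_double_le norm_prod_annulus_double_le[OF M(2) False R]) auto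
      also have "\<dots> = exp ((5 * C + 2 * M) * cmod z)" by (simp add: exp_add[symmetric] algebra_simps)
      finally show ?thesis .
    qed
    then show ?thesis
      by (intro tendsto_upperbound[OF tendsto_norm[OF partial_prod_tendsto]] eventually_at_top_linorderI)
         simp_all
  qed
  then show ?thesis using that by blast
qed

end

section \<open>A Jensen-type formula off the sequence\<close>

lemma closed_disc_eq_open_disc:
  assumes fin: "\<And>R. finite {k\<in>K. cmod (a k) \<le> R}"
  obtains R where "R > T" "{k\<in>K. cmod (a k) \<le> T} = {k\<in>K. cmod (a k) < R}"
proof -
  define F where "F = {k\<in>K. T < cmod (a k) \<and> cmod (a k) \<le> T + 1}"
  have fF: "finite F" unfolding F_def by (rule finite_subset[OF _ fin[of "T + 1"]]) auto
  define R where "R = Min (insert (T + 1) ((\<lambda>k. cmod (a k)) ` F))"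
  have RT: "R > T" unfolding R_def using fF by (subst Min_gr_iff) (auto simp: F_def)
  have "R \<le> cmod (a k)" if "k \<in> F" for k
    unfolding R_def using fF that by (intro Min_le) auto
  moreover have "R \<le> T + 1" unfolding R_def using fF by (intro Min_le) auto
  ultimately have "{k\<in>K. cmod (a k) \<le> T} = {k\<in>K. cmod (a k) < R}"
    using RT by (force simp: F_def)
  then show ?thesis using RT that by blast
qed

lemma ln_norm_prod_one_minus:
  assumes "finite F" "\<And>k. k \<in> F \<Longrightarrow> a k \<noteq> 0" "\<And>k. k \<in> F \<Longrightarrow> a k \<noteq> z"
  shows "ln (cmod (\<Prod>k\<in>F. 1 - z / a k)) = (\<Sum>k\<in>F. ln (cmod (a k - z)) - ln (cmod (a k)))"
proof -
  have "cmod (\<Prod>k\<in>F. 1 - z / a k) = (\<Prod>k\<in>F. cmod (a k - z) / cmod (a k))"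
    unfolding prod_norm[symmetric]
  proof (rule prod.cong[OF refl])
    fix k assume "k \<in> F"
    then have "1 - z / a k = (a k - z) / a k" using assms(2) by (simp add: field_simps)
    then show "cmod (1 - z / a k) = cmod (a k - z) / cmod (a k)" by (simp add: norm_divide)
  qed
  also have "ln \<dots> = (\<Sum>k\<in>F. ln (cmod (a k - z) / cmod (a k)))"
    by (rule ln_prod[OF assms(1)]) (use assms in auto)
  also have "\<dots> = (\<Sum>k\<in>F. ln (cmod (a k - z)) - ln (cmod (a k)))"
    by (intro sum.cong refl ln_divide_pos) (use assms in auto)
  finally show ?thesis .
qed

definition disc_shift_error :: "nat set \<Rightarrow> (nat \<Rightarrow> complex) \<Rightarrow> complex \<Rightarrow> real \<Rightarrow> real" where
  "disc_shift_error K a z T =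
     (\<Sum>k\<in>{k\<in>K. cmod (a k) \<le> T}. ln T - ln (cmod (a k - z)))
   - (\<Sum>k\<in>{k\<in>K. cmod (a k - z) \<le> T}. ln T - ln (cmod (a k - z)))"

lemma has_integral_cnt_diff_div:
  assumes fin: "\<And>R. finite {k\<in>K. cmod (a k) \<le> R}"
    and nonzero: "\<And>k. k \<in> K \<Longrightarrow> a k \<noteq> 0" and z: "z \<notin> a ` K"
  shows "((\<lambda>t. (cnt K a 0 t - cnt K a z t) / t) has_integral
           ln (cmod (\<Prod>k\<in>{k\<in>K. cmod (a k) \<le> T}. 1 - z / a k)) + disc_shift_error K a z T) {0..T}"
proof -
  define D where "D = {k\<in>K. cmod (a k) \<le> T}"
  have "((\<lambda>t. cnt K a 0 t / t - cnt K a z t / t) has_integral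
      (\<Sum>k\<in>{k\<in>K. cmod (a k - 0) \<le> T}. ln T - ln (cmod (a k - 0)))
    - (\<Sum>k\<in>{k\<in>K. cmod (a k - z) \<le> T}. ln T - ln (cmod (a k - z)))) {0..T}"
    by (intro has_integral_diff has_integral_cnt_div[OF fin]) (use nonzero z in auto)
  moreover have "(\<Sum>k\<in>D. ln T - ln (cmod (a k)))
      = (\<Sum>k\<in>D. ln (cmod (a k - z)) - ln (cmod (a k))) + (\<Sum>k\<in>D. ln T - ln (cmod (a k - z)))"
    by (simp add: sum.distrib[symmetric])
  moreover have "ln (cmod (\<Prod>k\<in>D. 1 - z / a k)) = (\<Sum>k\<in>D. ln (cmod (a k - z)) - ln (cmod (a k)))"
    by (rule ln_norm_prod_one_minus) (use fin nonzero z in \<open>auto simp: D_def\<close>)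
  ultimately show ?thesis
    by (simp add: D_def disc_shift_error_def diff_divide_distrib add_diff_eq)
qed

text \<open>Only indices in the shell \<open>T - |z| < |a k| \<le> T + |z|\<close> contribute, each by at most \<open>2|z|/T\<close>.\<close>

lemma abs_ln_diff_le:
  fixes x T r :: real
  assumes T: "0 < T" and x: "T / 2 \<le> x" and r: "\<bar>x - T\<bar> \<le> r"
  shows "\<bar>ln x - ln T\<bar> \<le> 2 * r / T"
proof -
  have xpos: "x > 0" using T x by linarith
  have "ln x - ln T \<le> x / T - 1"
    using ln_le_minus_one[of "x / T"] xpos T by (simp add: ln_div)
  also have "\<dots> = (x - T) / T" using T by (simp add: diff_divide_distrib)
  also have "\<dots> \<le> 2 * r / T" using T r by (intro divide_right_mono) auto
  finally have upper: "ln x - ln T \<le> 2 * r / T" .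
  have "ln T - ln x \<le> T / x - 1"
    using ln_le_minus_one[of "T / x"] xpos T by (simp add: ln_div)
  also have "\<dots> = (T - x) / x" using xpos by (simp add: field_simps)
  also have "\<dots> \<le> r / (T / 2)" using T x r xpos by (intro frac_le) auto
  also have "\<dots> = 2 * r / T" by simp
  finally show ?thesis using upper by linarith
qed

lemma abs_disc_shift_error_le:
  assumes fin: "\<And>R. finite {k\<in>K. cmod (a k) \<le> R}"
    and z: "z \<notin> a ` K" and T: "T \<ge> 2 * cmod z + 1"
  shows "\<bar>disc_shift_error K a z T\<bar> \<le> (cnt K a 0 (T + cmod z) - cnt K a 0 (T - cmod z)) * (2 * cmod z / T)"
proof -
  define r where "r = cmod z"
  define G where "G = {k\<in>K. cmod (a k) \<le> T}"
  define H where "H = {k\<in>K. cmod (a k - z) \<le> T}"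
  define W where "W = {k\<in>K. T - r < cmod (a k - 0) \<and> cmod (a k - 0) \<le> T + r}"
  define \<phi> where "\<phi> k = ln T - ln (cmod (a k - z))" for k
  have fG: "finite G" unfolding G_def using finite_cnt_set[OF fin, of 0 T] by simp
  have fH: "finite H" unfolding H_def by (rule finite_cnt_set[OF fin])
  have fW: "finite W" unfolding W_def by (rule finite_subset[OF _ finite_cnt_set[OF fin, of 0 "T + r"]]) auto
  have r0: "r \<ge> 0" by (simp add: r_def)
  have Tpos: "T > 0" and Tr: "T - r \<ge> T / 2" using T r0 unfolding r_def by linarith+
  have tri1: "cmod (a k) \<le> cmod (a k - z) + r" for k
    unfolding r_def by (metis norm_triangle_sub add.commute)
  have tri2: "cmod (a k - z) \<le> cmod (a k) + r" for k
    unfolding r_def by (simp add: norm_triangle_ineq4)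
  have bound: "\<bar>\<phi> k\<bar> \<le> 2 * r / T" if "k \<in> (G - H) \<union> (H - G)" for k
  proof -
    have "T / 2 \<le> cmod (a k - z)" "\<bar>cmod (a k - z) - T\<bar> \<le> r"
      using that tri1[of k] tri2[of k] Tr by (auto simp: G_def H_def)
    then have "\<bar>ln (cmod (a k - z)) - ln T\<bar> \<le> 2 * r / T" by (rule abs_ln_diff_le[OF Tpos])
    then show ?thesis by (simp add: \<phi>_def abs_minus_commute)
  qed
  have "disc_shift_error K a z T = (\<Sum>k\<in>G - H. \<phi> k) - (\<Sum>k\<in>H - G. \<phi> k)"
    unfolding disc_shift_error_def G_def[symmetric] H_def[symmetric] \<phi>_def[symmetric]
    using sum.Int_Diff[OF fG, of \<phi> H] sum.Int_Diff[OF fH, of \<phi> G] by (simp add: Int_commute)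
  also have "\<bar>\<dots>\<bar> \<le> (\<Sum>k\<in>G - H. \<bar>\<phi> k\<bar>) + (\<Sum>k\<in>H - G. \<bar>\<phi> k\<bar>)"
    using sum_abs[of \<phi> "G - H"] sum_abs[of \<phi> "H - G"] by linarith
  also have "\<dots> = (\<Sum>k\<in>(G - H) \<union> (H - G). \<bar>\<phi> k\<bar>)"
    by (rule sum.union_disjoint[symmetric]) (use fG fH in auto)
  also have "\<dots> \<le> real (card ((G - H) \<union> (H - G))) * (2 * r / T)"
    by (rule sum_bounded_above) (rule bound)
  also have "\<dots> \<le> real (card W) * (2 * r / T)"
  proof (intro mult_right_mono of_nat_mono card_mono[OF fW])
    show "G - H \<union> (H - G) \<subseteq> W"
    proof safe
      fix k assume "k \<in> G" "k \<notin> H"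
      then show "k \<in> W" using tri2[of k] by (auto simp: G_def H_def W_def)
    next
      fix k assume "k \<in> H" "k \<notin> G"
      then show "k \<in> W" using tri1[of k] by (auto simp: G_def H_def W_def)
    qed
  qed (use r0 Tpos in auto)
  also have "real (card W) = cnt K a 0 (T + r) - cnt K a 0 (T - r)"
    unfolding W_def by (rule card_shell_eq_cnt_diff[OF fin]) (use r0 in simp)
  finally show ?thesis by (simp add: r_def)
qed

lemma disc_shift_error_tendsto_0:
  assumes fin: "\<And>R. finite {k\<in>K. cmod (a k) \<le> R}"
    and z: "z \<notin> a ` K" and thin: "thin_shells K a"
  shows "(disc_shift_error K a z \<longlongrightarrow> 0) at_top"
proof (rule tendstoI)
  fix e :: real assume e: "e > 0"
  define r where "r = cmod z"
  have r0: "r \<ge> 0" by (simp add: r_def)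
  define \<epsilon> where "\<epsilon> = e / (2 * (2 * r + 1))"
  have \<epsilon>: "\<epsilon> > 0" using e r0 by (simp add: \<epsilon>_def)
  have "2 * r * \<epsilon> < e"
  proof -
    have "2 * r * \<epsilon> = e * (2 * r / (2 * (2 * r + 1)))" by (simp add: \<epsilon>_def)
    also have "\<dots> < e * 1" using e r0 by (intro mult_strict_left_mono) auto
    finally show ?thesis by simp
  qed
  show "eventually (\<lambda>T. dist (disc_shift_error K a z T) 0 < e) at_top"
    using thin_shellsD[OF thin r0 \<epsilon>] eventually_ge_at_top[of "2 * r + 1"]
  proof eventually_elim
    case (elim T)
    have Tpos: "T > 0" using elim r0 by linarith
    have "\<bar>disc_shift_error K a z T\<bar> \<le> (cnt K a 0 (T + r) - cnt K a 0 (T - r)) * (2 * r / T)"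
      unfolding r_def by (rule abs_disc_shift_error_le[OF fin z]) (use elim in \<open>simp add: r_def\<close>)
    also have "\<dots> \<le> (\<epsilon> * T) * (2 * r / T)"
      using elim Tpos r0 by (intro mult_right_mono) auto
    also have "\<dots> = 2 * r * \<epsilon>" using Tpos by simp
    finally show ?case using \<open>2 * r * \<epsilon> < e\<close> by simp
  qed
qed

context lindelof_sequence
begin

lemma prod_closed_disc_tendsto:
  "((\<lambda>T. \<Prod>k\<in>{k\<in>K. cmod (a k) \<le> T}. 1 - z / a k) \<longlongrightarrow> canonical_product z) at_top"
proof (rule tendstoI)
  fix e :: real assume "e > 0"
  obtain R0 where R0: "\<And>R w. R0 \<le> R \<Longrightarrow> cmod w \<le> cmod z \<Longrightarrow>
      cmod (partial_prod K a R w - canonical_product w) \<le> e / 2"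
    by (rule partial_prod_uniform_approx[of "cmod z" "e/2"]) (use \<open>e > 0\<close> in auto)
  show "eventually (\<lambda>T. dist (\<Prod>k\<in>{k\<in>K. cmod (a k) \<le> T}. 1 - z / a k) (canonical_product z) < e) at_top"
  proof (rule eventually_at_top_linorderI[of R0])
    fix T assume T: "T \<ge> R0"
    obtain R where R: "R > T" "{k\<in>K. cmod (a k) \<le> T} = {k\<in>K. cmod (a k) < R}"
      using closed_disc_eq_open_disc[OF finite_le] by blast
    have "cmod (partial_prod K a R z - canonical_product z) \<le> e / 2" using R T by (intro R0) auto
    then show "dist (\<Prod>k\<in>{k\<in>K. cmod (a k) \<le> T}. 1 - z / a k) (canonical_product z) < e"
      using \<open>e > 0\<close> R(2) by (simp add: dist_norm partial_prod_def)
  qed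
qed

lemma integral_cnt_diff_div_tendsto:
  assumes thin: "thin_shells K a" and z: "z \<notin> a ` K"
  shows "((\<lambda>T. integral {0..T} (\<lambda>t. (cnt K a 0 t - cnt K a z t) / t))
           \<longlongrightarrow> ln (cmod (canonical_product z))) at_top"
proof -
  have "((\<lambda>T. ln (cmod (\<Prod>k\<in>{k\<in>K. cmod (a k) \<le> T}. 1 - z / a k)) + disc_shift_error K a z T)
      \<longlongrightarrow> ln (cmod (canonical_product z)) + 0) at_top"
    using canonical_product_nonzero[OF z]
    by (intro tendsto_intros prod_closed_disc_tendsto disc_shift_error_tendsto_0[OF finite_le z thin]) simp
  then show ?thesis
    using integral_unique[OF has_integral_cnt_diff_div[OF finite_le nonzero z]] by simp
qed

lemma has_integral_cnt_diff_div_atLeast: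
  assumes thin: "thin_shells K a" and z: "z \<notin> a ` K" and "0 \<le> \<epsilon>"
  shows "((\<lambda>t. (cnt K a 0 t - cnt K a z t) / t) has_integral
           ln (cmod (canonical_product z)) - integral {0..\<epsilon>} (\<lambda>t. (cnt K a 0 t - cnt K a z t) / t)) {\<epsilon>..}"
proof (rule has_integral_atLeast_tendsto)
  define f where "f t = (cnt K a 0 t - cnt K a z t) / t" for t
  have int: "f integrable_on {0..T}" for T
    unfolding f_def using has_integral_cnt_diff_div[OF finite_le nonzero z] by blast
  show "f integrable_on {\<epsilon>..T}" for T
    by (rule integrable_subinterval_real[OF int[of T]]) (use \<open>0 \<le> \<epsilon>\<close> in auto)
  have "((\<lambda>T. integral {0..T} f - integral {0..\<epsilon>} f)
      \<longlongrightarrow> ln (cmod (canonical_product z)) - integral {0..\<epsilon>} f) at_top"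
    unfolding f_def by (intro tendsto_intros integral_cnt_diff_div_tendsto[OF thin z])
  moreover have "eventually (\<lambda>T. integral {0..T} f - integral {0..\<epsilon>} f = integral {\<epsilon>..T} f) at_top"
    using eventually_ge_at_top[of \<epsilon>]
  proof eventually_elim
    case (elim T)
    show ?case
      using Henstock_Kurzweil_Integration.integral_combine[OF \<open>0 \<le> \<epsilon>\<close> elim int[of T]] by simp
  qed
  ultimately show "((\<lambda>T. integral {\<epsilon>..T} f) \<longlongrightarrow> ln (cmod (canonical_product z)) - integral {0..\<epsilon>} f) at_top"
    by (rule Lim_transform_eventually)
qed

end

section \<open>Zeros of the canonical product\<close>

lemma higher_deriv_power_mult_at:
  fixes z :: complex
  assumes h: "h holomorphic_on UNIV"
  shows "(deriv ^^ n) (\<lambda>w. (w - z) ^ n * h w) z = fact n * h z"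
proof -
  have "(deriv ^^ n) (\<lambda>w. (w - z) ^ n * h w) z =
        (\<Sum>i = 0..n. of_nat (n choose i) * (deriv ^^ i) (\<lambda>w. (w - z) ^ n) z * (deriv ^^ (n - i)) h z)"
    by (rule higher_deriv_mult[OF _ h]) (auto intro!: holomorphic_intros)
  also have "\<dots> = (\<Sum>i = 0..n. if i = n then fact n * h z else 0)"
    by (intro sum.cong refl) (auto simp: higher_deriv_power pochhammer_fact)
  finally show ?thesis by simp
qed

lemma cnt_0_eq_card: "cnt K a z 0 = real (card {k\<in>K. a k = z})"
proof -
  have "{k\<in>K. cmod (a k - z) \<le> 0} = {k\<in>K. a k = z}" by auto
  then show ?thesis by (simp add: cnt_def)
qed

lemma (in lindelof_sequence) remove_point:
  "lindelof_sequence {k\<in>K. a k \<noteq> z} a C (L - of_nat (card {k\<in>K. a k = z}) / z)"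
proof
  show "\<And>k. k \<in> {k\<in>K. a k \<noteq> z} \<Longrightarrow> a k \<noteq> 0" using nonzero by auto
  show "\<And>R. finite {k\<in>{k\<in>K. a k \<noteq> z}. cmod (a k) \<le> R}"
    by (rule finite_subset[OF _ finite_le]) auto
  show "C \<ge> 0" by (rule C_nonneg)
  show "cnt {k\<in>K. a k \<noteq> z} a 0 t \<le> C * t" if "t \<ge> 0" for t
    using cnt_subset_le[OF finite_le, of "{k\<in>K. a k \<noteq> z}" 0 t] cnt_le[OF that] by auto
  have "eventually (\<lambda>R. (\<Sum>k\<in>{k\<in>K. cmod (a k) < R}. 1 / a k) - of_nat (card {k\<in>K. a k = z}) / z
      = (\<Sum>k\<in>{k\<in>{k\<in>K. a k \<noteq> z}. cmod (a k) < R}. 1 / a k)) at_top"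
  proof (rule eventually_at_top_linorderI[of "cmod z + 1"])
    fix R assume R: "R \<ge> cmod z + 1"
    have split: "{k\<in>K. cmod (a k) < R} = {k\<in>{k\<in>K. a k \<noteq> z}. cmod (a k) < R} \<union> {k\<in>K. a k = z}"
      using R by auto
    have "(\<Sum>k\<in>{k\<in>K. cmod (a k) < R}. 1 / a k)
        = (\<Sum>k\<in>{k\<in>{k\<in>K. a k \<noteq> z}. cmod (a k) < R}. 1 / a k) + (\<Sum>k\<in>{k\<in>K. a k = z}. 1 / a k)"
      unfolding split by (rule sum.union_disjoint) (use R in \<open>auto intro: finite_subset[OF _ finite_lt[of R]]\<close>)
    then show "(\<Sum>k\<in>{k\<in>K. cmod (a k) < R}. 1 / a k) - of_nat (card {k\<in>K. a k = z}) / z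
        = (\<Sum>k\<in>{k\<in>{k\<in>K. a k \<noteq> z}. cmod (a k) < R}. 1 / a k)"
      by (simp add: divide_inverse)
  qed
  then show "((\<lambda>R. \<Sum>k\<in>{k\<in>{k\<in>K. a k \<noteq> z}. cmod (a k) < R}. 1 / a k)
      \<longlongrightarrow> L - of_nat (card {k\<in>K. a k = z}) / z) at_top"
    by (rule Lim_transform_eventually[OF tendsto_diff[OF sum_inverse_tendsto tendsto_const]])
qed

locale lindelof_zero = lindelof_sequence +
  fixes z :: complex
  assumes thin: "thin_shells K a" and zero: "z \<in> a ` K"
begin

abbreviation zero_mult :: nat where
  "zero_mult \<equiv> card {k\<in>K. a k = z}"

sublocale removed: lindelof_sequence "{k\<in>K. a k \<noteq> z}" a C "L - of_nat zero_mult / z"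
  by (rule remove_point)

lemma removed_thin: "thin_shells {k\<in>K. a k \<noteq> z} a"
  by (rule thin_shells_subset[OF finite_le thin]) auto

lemma point_notin_removed: "z \<notin> a ` {k\<in>K. a k \<noteq> z}"
  by auto

lemma point_nonzero: "z \<noteq> 0"
  using zero nonzero by auto

lemma finite_point_indices: "finite {k\<in>K. a k = z}"
  by (rule finite_subset[OF _ finite_le[of "cmod z"]]) auto

lemma zero_mult_pos: "zero_mult > 0"
  using zero finite_point_indices by (auto simp: card_gt_0_iff)

lemma cnt_0_split: "cnt K a 0 t = cnt {k\<in>K. a k \<noteq> z} a 0 t + (if cmod z \<le> t then real zero_mult else 0)"
  using cnt_remove_point[OF finite_le, of 0 t z] by simp

lemma cnt_point_split: "t \<ge> 0 \<Longrightarrow> cnt K a z t = cnt {k\<in>K. a k \<noteq> z} a z t + real zero_mult"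
  using cnt_remove_point[OF finite_le, of z t z] by simp

lemma canonical_product_factor:
  "canonical_product w = (w - z) ^ zero_mult * ((- 1 / z) ^ zero_mult * removed.canonical_product w)"
proof -
  have "eventually (\<lambda>R. partial_prod {k\<in>K. a k \<noteq> z} a R w * (1 - w / z) ^ zero_mult = partial_prod K a R w) at_top"
  proof (rule eventually_at_top_linorderI[of "cmod z + 1"])
    fix R assume R: "R \<ge> cmod z + 1"
    have split: "{k\<in>K. cmod (a k) < R} = {k\<in>{k\<in>K. a k \<noteq> z}. cmod (a k) < R} \<union> {k\<in>K. a k = z}"
      using R by auto
    have "partial_prod K a R w = partial_prod {k\<in>K. a k \<noteq> z} a R w * (\<Prod>k\<in>{k\<in>K. a k = z}. 1 - w / a k)"
      unfolding partial_prod_def split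
      by (rule prod.union_disjoint) (use removed.finite_lt finite_point_indices in auto)
    then show "partial_prod {k\<in>K. a k \<noteq> z} a R w * (1 - w / z) ^ zero_mult = partial_prod K a R w"
      by simp
  qed
  then have "((\<lambda>R. partial_prod K a R w) \<longlongrightarrow> removed.canonical_product w * (1 - w / z) ^ zero_mult) at_top"
    by (rule Lim_transform_eventually[OF tendsto_mult[OF removed.partial_prod_tendsto tendsto_const]])
  then have "canonical_product w = removed.canonical_product w * (1 - w / z) ^ zero_mult"
    by (rule canonical_product_eqI)
  moreover have "1 - w / z = (w - z) * (- 1 / z)" using point_nonzero by (simp add: field_simps)
  ultimately show ?thesis by (simp only: power_mult_distrib mult_ac)
qed

lemma ln_norm_higher_deriv_canonical_product:
  "ln (cmod ((deriv ^^ zero_mult) canonical_product z / fact zero_mult))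
     = ln (cmod (removed.canonical_product z)) - real zero_mult * ln (cmod z)"
proof -
  have "(deriv ^^ zero_mult) canonical_product z = fact zero_mult * ((- 1 / z) ^ zero_mult * removed.canonical_product z)"
    unfolding canonical_product_factor[abs_def]
    by (rule higher_deriv_power_mult_at) (intro holomorphic_intros removed.holomorphic_canonical_product)
  then have "cmod ((deriv ^^ zero_mult) canonical_product z / fact zero_mult)
      = cmod (removed.canonical_product z) / cmod z ^ zero_mult"
    by (simp add: norm_mult norm_power norm_divide power_one_over)
  then show ?thesis
    using removed.canonical_product_nonzero[OF point_notin_removed] point_nonzero
    by (simp add: ln_divide_pos ln_realpow)
qed

text \<open>
  Off \<open>[|z|, \<infinity>)\<close> the two counting functions differ from those of \<open>removed\<close> by the
  \<open>zero_mult\<close> copies of \<open>z\<close>, which are counted around \<open>z\<close> but not yet around \<open>0\<close>.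
\<close>

lemma has_integral_cnt_diff_div_atLeast:
  assumes "0 < \<epsilon>"
  shows "((\<lambda>t. (cnt K a 0 t - cnt K a z t) / t) has_integral
      ln (cmod (removed.canonical_product z))
      - integral {0..\<epsilon>} (\<lambda>t. (cnt {k\<in>K. a k \<noteq> z} a 0 t - cnt {k\<in>K. a k \<noteq> z} a z t) / t)
      - real zero_mult * (ln (max \<epsilon> (cmod z)) - ln \<epsilon>)) {\<epsilon>..}"
proof -
  have "((\<lambda>t. (cnt {k\<in>K. a k \<noteq> z} a 0 t - cnt {k\<in>K. a k \<noteq> z} a z t) / t
            - (if t < cmod z then real zero_mult / t else 0)) has_integral
      ln (cmod (removed.canonical_product z))
      - integral {0..\<epsilon>} (\<lambda>t. (cnt {k\<in>K. a k \<noteq> z} a 0 t - cnt {k\<in>K. a k \<noteq> z} a z t) / t)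
      - real zero_mult * (ln (max \<epsilon> (cmod z)) - ln \<epsilon>)) {\<epsilon>..}"
    using assms
    by (intro has_integral_diff removed.has_integral_cnt_diff_div_atLeast[OF removed_thin point_notin_removed]
        has_integral_inverse_below) auto
  then show ?thesis
  proof (rule has_integral_eq[rotated])
    fix t assume "t \<in> {\<epsilon>..}"
    then have "t \<ge> 0" using assms by simp
    then show "(cnt {k\<in>K. a k \<noteq> z} a 0 t - cnt {k\<in>K. a k \<noteq> z} a z t) / t
        - (if t < cmod z then real zero_mult / t else 0) = (cnt K a 0 t - cnt K a z t) / t"
      by (auto simp: cnt_0_split cnt_point_split diff_divide_distrib add_divide_distrib)
  qed
qed

lemma integral_cnt_diff_div_atLeast_tendsto:
  "filterlim (\<lambda>\<epsilon>. integral {\<epsilon>..} (\<lambda>t. (cnt K a 0 t - cnt K a z t) / t)) at_bot (at_right 0)"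
proof -
  define h where "h t = (cnt {k\<in>K. a k \<noteq> z} a 0 t - cnt {k\<in>K. a k \<noteq> z} a z t) / t" for t
  obtain \<delta>0 where \<delta>0: "\<delta>0 > 0" "\<And>t. t < \<delta>0 \<Longrightarrow> cnt {k\<in>K. a k \<noteq> z} a 0 t = 0"
    using cnt_eq_0_near_0[OF removed.finite_le removed.nonzero] by blast
  obtain \<delta>z where \<delta>z: "\<delta>z > 0" "\<And>t. t < \<delta>z \<Longrightarrow> cnt {k\<in>K. a k \<noteq> z} a z t = 0"
    using cnt_eq_0_near_0[OF removed.finite_le, of z] by blast
  define \<delta> where "\<delta> = min (min \<delta>0 \<delta>z) (cmod z)"
  have "\<delta> > 0" using \<delta>0 \<delta>z point_nonzero by (simp add: \<delta>_def)
  have "integral {\<epsilon>..} (\<lambda>t. (cnt K a 0 t - cnt K a z t) / t)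
      = (ln (cmod (removed.canonical_product z)) - real zero_mult * ln (cmod z)) + real zero_mult * ln \<epsilon>"
    if "\<epsilon> \<in> {0<..<\<delta>}" for \<epsilon>
  proof -
    have "(h has_integral 0) {0..\<epsilon>}"
      by (rule has_integral_eq[rotated, OF has_integral_0])
         (use that \<delta>0 \<delta>z in \<open>auto simp: h_def \<delta>_def\<close>)
    then have "integral {0..\<epsilon>} h = 0" by (rule integral_unique)
    moreover have "max \<epsilon> (cmod z) = cmod z" using that by (simp add: \<delta>_def)
    ultimately show ?thesis
      using integral_unique[OF has_integral_cnt_diff_div_atLeast[of \<epsilon>]] that
      by (simp add: h_def[abs_def] algebra_simps)
  qed
  then have "eventually (\<lambda>\<epsilon>. (ln (cmod (removed.canonical_product z)) - real zero_mult * ln (cmod z))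
      + real zero_mult * ln \<epsilon> = integral {\<epsilon>..} (\<lambda>t. (cnt K a 0 t - cnt K a z t) / t)) (at_right 0)"
    using \<open>\<delta> > 0\<close> by (auto intro!: eventually_at_rightI[of 0 \<delta>])
  moreover have "filterlim (\<lambda>\<epsilon>. (ln (cmod (removed.canonical_product z)) - real zero_mult * ln (cmod z))
      + real zero_mult * ln \<epsilon>) at_bot (at_right 0)"
    using zero_mult_pos
    by (intro filterlim_tendsto_add_at_bot_iff[THEN iffD2, OF tendsto_const]
        filterlim_tendsto_pos_mult_at_bot[OF tendsto_const _ ln_at_0]) simp
  ultimately show ?thesis
    by (rule filterlim_cong[THEN iffD1, rotated 2]) simp_all
qed

lemma ln_norm_higher_deriv_eq_integrals:
  "\<exists>I1 I2. ((\<lambda>t. (cnt K a 0 t - cnt K a z t) / t) has_integral I1) {1..}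
      \<and> ((\<lambda>t. (cnt K a 0 t - cnt K a z t + real zero_mult) / t) has_integral I2) {0..1}
      \<and> ln (cmod ((deriv ^^ zero_mult) canonical_product z / fact zero_mult)) = I1 + I2"
proof (intro exI conjI)
  define h where "h t = (cnt {k\<in>K. a k \<noteq> z} a 0 t - cnt {k\<in>K. a k \<noteq> z} a z t) / t" for t
  define I where "I = integral {0..1} h"
  have "h integrable_on {0..1}"
    unfolding h_def using has_integral_cnt_diff_div[OF removed.finite_le removed.nonzero point_notin_removed] by blast
  then have "((\<lambda>t. h t + (if cmod z \<le> t then real zero_mult / t else 0)) has_integral
      I + (if cmod z \<le> 1 then real zero_mult * (ln 1 - ln (cmod z)) else 0)) {0..1}"
    unfolding I_def using point_nonzero
    by (intro has_integral_add integrable_integral has_integral_inverse_from) auto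
  then show "((\<lambda>t. (cnt K a 0 t - cnt K a z t + real zero_mult) / t) has_integral
      I + (if cmod z \<le> 1 then real zero_mult * (ln 1 - ln (cmod z)) else 0)) {0..1}"
    by (rule has_integral_eq[rotated])
       (auto simp: h_def cnt_0_split cnt_point_split diff_divide_distrib add_divide_distrib)
  show "((\<lambda>t. (cnt K a 0 t - cnt K a z t) / t) has_integral
      ln (cmod (removed.canonical_product z)) - I - real zero_mult * (ln (max 1 (cmod z)) - ln 1)) {1..}"
    using has_integral_cnt_diff_div_atLeast[of 1] by (simp add: I_def h_def[abs_def])
  show "ln (cmod ((deriv ^^ zero_mult) canonical_product z / fact zero_mult))
      = ln (cmod (removed.canonical_product z)) - I - real zero_mult * (ln (max 1 (cmod z)) - ln 1)
      + (I + (if cmod z \<le> 1 then real zero_mult * (ln 1 - ln (cmod z)) else 0))"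
    unfolding ln_norm_higher_deriv_canonical_product by (simp add: max_def)
qed

end

theorem lemma1:
  fixes K :: "nat set" and a :: "nat \<Rightarrow> complex"
  assumes nonzero: "\<And>k. k \<in> K \<Longrightarrow> a k \<noteq> 0"
    and no_limit_pts: "\<And>R. finite {k\<in>K. cmod (a k) \<le> R}"
    and sum_lim: "\<exists>L. ((\<lambda>R::real. \<Sum>k\<in>{k\<in>K. cmod (a k) < R}. 1 / a k) \<longlongrightarrow> L) at_top"
    and growth: "(\<lambda>t. cnt K a 0 t) \<in> O[at_top](\<lambda>t. t)"
    and incr: "(\<lambda>t. cnt K a 0 (t + 1) - cnt K a 0 t) \<in> o[at_top](\<lambda>t. t)"
  shows "\<exists>g::complex \<Rightarrow> complex.
     (\<forall>z. ((\<lambda>R. partial_prod K a R z) \<longlongrightarrow> g z) at_top)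
   \<and> g holomorphic_on UNIV
   \<and> (\<exists>A B. \<forall>z. cmod (g z) \<le> A * exp (B * cmod z))
   \<and> (\<forall>z. z \<notin> a ` K \<longrightarrow>
        ((\<lambda>t. (cnt K a 0 t - cnt K a z t) / t) has_integral ln (cmod (g z))) {0..})
   \<and> (\<forall>z. z \<in> a ` K \<longrightarrow>
        g z = 0
        \<and> (\<forall>\<epsilon>>0. (\<lambda>t. (cnt K a 0 t - cnt K a z t) / t) integrable_on {\<epsilon>..})
        \<and> filterlim (\<lambda>\<epsilon>. integral {\<epsilon>..} (\<lambda>t. (cnt K a 0 t - cnt K a z t) / t))
                    at_bot (at_right 0))
   \<and> (\<forall>z0 (l::nat). real l = cnt K a z0 0 \<longrightarrow> l > 0 \<longrightarrow>
        (\<exists>I1 I2.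
           ((\<lambda>t. (cnt K a 0 t - cnt K a z0 t) / t) has_integral I1) {1..}
         \<and> ((\<lambda>t. (cnt K a 0 t - cnt K a z0 t + real l) / t) has_integral I2) {0..1}
         \<and> ln (cmod ((deriv ^^ l) g z0 / fact l)) = I1 + I2))"
proof -
  obtain C where C: "C \<ge> 0" "\<And>t. t \<ge> 0 \<Longrightarrow> cnt K a 0 t \<le> C * t"
    using cnt_le_linear[OF no_limit_pts nonzero growth] by blast
  obtain L where L: "((\<lambda>R::real. \<Sum>k\<in>{k\<in>K. cmod (a k) < R}. 1 / a k) \<longlongrightarrow> L) at_top"
    using sum_lim by blast
  interpret lindelof_sequence K a C L
    by unfold_locales (use nonzero no_limit_pts L C in auto)
  have thin: "thin_shells K a" by (rule thin_shells_if_small_increments[OF no_limit_pts incr])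
  have zero: "lindelof_zero K a C L z" if "z \<in> a ` K" for z
    by unfold_locales (use thin that in auto)
  obtain B where B: "\<And>z. cmod (canonical_product z) \<le> exp (B * cmod z)"
    using canonical_product_exponential_type by blast
  show ?thesis
  proof (intro exI[of _ canonical_product] conjI allI impI)
    show "((\<lambda>R. partial_prod K a R z) \<longlongrightarrow> canonical_product z) at_top" for z
      by (rule partial_prod_tendsto)
    show "canonical_product holomorphic_on UNIV"
      by (rule holomorphic_canonical_product)
    show "\<exists>A B. \<forall>z. cmod (canonical_product z) \<le> A * exp (B * cmod z)"
      using B by (intro exI[of _ 1] exI[of _ B]) simp
    show "((\<lambda>t. (cnt K a 0 t - cnt K a z t) / t) has_integral ln (cmod (canonical_product z))) {0..}"
      if "z \<notin> a ` K" for z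
      using has_integral_cnt_diff_div_atLeast[OF thin that, of 0] by simp
    show "canonical_product z = 0" if "z \<in> a ` K" for z
      by (rule canonical_product_eq_0[OF that])
    show "(\<lambda>t. (cnt K a 0 t - cnt K a z t) / t) integrable_on {\<epsilon>..}" if "z \<in> a ` K" "\<epsilon> > 0" for z \<epsilon>
      using lindelof_zero.has_integral_cnt_diff_div_atLeast[OF zero[OF that(1)] that(2)] by blast
    show "filterlim (\<lambda>\<epsilon>. integral {\<epsilon>..} (\<lambda>t. (cnt K a 0 t - cnt K a z t) / t)) at_bot (at_right 0)"
      if "z \<in> a ` K" for z
      by (rule lindelof_zero.integral_cnt_diff_div_atLeast_tendsto[OF zero[OF that]])
    show "\<exists>I1 I2. ((\<lambda>t. (cnt K a 0 t - cnt K a z0 t) / t) has_integral I1) {1..}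
        \<and> ((\<lambda>t. (cnt K a 0 t - cnt K a z0 t + real l) / t) has_integral I2) {0..1}
        \<and> ln (cmod ((deriv ^^ l) canonical_product z0 / fact l)) = I1 + I2"
      if "real l = cnt K a z0 0" "l > 0" for z0 and l :: nat
    proof -
      have "l = card {k\<in>K. a k = z0}" "z0 \<in> a ` K"
        using that by (auto simp: cnt_0_eq_card card_gt_0_iff)
      then show ?thesis using lindelof_zero.ln_norm_higher_deriv_eq_integrals[OF zero] by blast
    qed
  qed
qed

end
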